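(* Let $1\le k<n$. Then $\mathbb{Y}_{OG(k,2n+1)}=\Theta(k,2n+1)$, and $f_k:\mathbb{Y}_{OG(k,2n+1)}\to P(n-k,n)$ is a bijection.
   Context: Root system $B_n$: positive roots $e_a\pm e_b$ ($a<b$), $e_a$; simple roots $e_i-e_{i+1}$ ($i<n$), $e_n$; order $\alpha\le\beta$ iff $\beta-\alpha$ is a nonnegative integer combination of simple roots. $W^{OG(k,2n+1)}$ is the set of signed permutations $w=(y_1,\dots,y_{k-r},\overline{z_r},\dots,\overline{z_1},v_1,\dots,v_{n-k})$ of $1,\dots,n$ (bars = negative entries) with $0\le r\le k$, $y_1<\dots<y_{k-r}$, $z_r>\dots>z_1$, $v_1<\dots<v_{n-k}$, acting by $e_a\mapsto\pm e_{|w(a)|}$; $\mathrm{Inv}(w)$ is the set of positive roots sent to negative roots, and $\mathbb{Y}_{OG(k,2n+1)}=\{\mathrm{Inv}(w): w\in W^{OG(k,2n+1)}\}$. Base region: roots $e_a\pm e_b$ ($a\le k<b$), $e_a$ ($a\le k$); its $i$-th row consists of $e_{k+1-i}\pm e_b$ ($b>k$) and $e_{k+1-i}$. Top region: $e_a+e_b$, $a<b\le k$. For a set $S$, $\lambda^{(1)}_i$ = number of roots of $S$ in base row $i$, $\lambda^{(2)}_i$ = number of roots of $S$ of the form $e_a+e_{k+1-i}$ with $a<k+1-i$, and $f_k(S)=(\lambda^{(1)}_i+\lambda^{(2)}_i)_{1\le i\le k}$. $\Theta(k,2n+1)$ is the set of subsets $S$ of the union of the two regions meeting each region in a lower order ideal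 and satisfying: for each top root $e_a+e_b$, $e_a+e_b\in S$ if $S$ has more than $2n+1-2k$ roots in the base rows indexed by $a$ and $b$ (rows $k+1-a$, $k+1-b$) combined, and $e_a+e_b\notin S$ if fewer. $P(n-k,n)$ is the set of partitions $\gamma=(\gamma_1\ge\dots\ge\gamma_k\ge0)$ with $\gamma_1\le 2n-k$ and $\gamma_i>\gamma_{i+1}$ whenever $\gamma_i>n-k$. *)

theory Defs
  imports Main
begin

text \<open>Roots of type B_n: e_a - e_b, e_a + e_b, e_a (indices 1..n).\<close>
datatype root = RMinus nat nat | RPlus nat nat | RShort nat

definition unitv :: "nat \<Rightarrow> nat \<Rightarrow> int" where
  "unitv a = (\<lambda>j. if j = a then 1 else 0)"

fun rvec :: "root \<Rightarrow> nat \<Rightarrow> int" where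
  "rvec (RMinus a b) = (\<lambda>j. unitv a j - unitv b j)"
| "rvec (RPlus a b) = (\<lambda>j. unitv a j + unitv b j)"
| "rvec (RShort a) = unitv a"

definition posroots :: "nat \<Rightarrow> root set" where
  "posroots n = {RMinus a b | a b. 1 \<le> a \<and> a < b \<and> b \<le> n}
              \<union> {RPlus a b | a b. 1 \<le> a \<and> a < b \<and> b \<le> n}
              \<union> {RShort a | a. 1 \<le> a \<and> a \<le> n}"

definition simple :: "nat \<Rightarrow> nat \<Rightarrow> nat \<Rightarrow> int" where
  "simple n i = (if i < n then rvec (RMinus i (Suc i)) else rvec (RShort n))"

definition root_le :: "nat \<Rightarrow> root \<Rightarrow> root \<Rightarrow> bool" where
  "root_le n \<alpha> \<beta> \<longleftrightarrow> (\<exists>c :: nat \<Rightarrow> nat.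
      (\<lambda>j. rvec \<beta> j - rvec \<alpha> j) = (\<lambda>j. \<Sum>i\<in>{1..n}. int (c i) * simple n i j))"

definition lower_ideal :: "nat \<Rightarrow> root set \<Rightarrow> root set \<Rightarrow> bool" where
  "lower_ideal n R S \<longleftrightarrow> S \<subseteq> R \<and> (\<forall>\<alpha>\<in>S. \<forall>\<beta>\<in>R. root_le n \<beta> \<alpha> \<longrightarrow> \<beta> \<in> S)"

text \<open>Signed permutations are functions on positions 1..n with values in +-{1..n}
  (value 0 outside 1..n); w acts by e_a \<mapsto> sgn(w a) e_|w a|.\<close>
definition act :: "nat \<Rightarrow> (nat \<Rightarrow> int) \<Rightarrow> (nat \<Rightarrow> int) \<Rightarrow> nat \<Rightarrow> int" where
  "act n w v = (\<lambda>j. \<Sum>a\<in>{1..n}. if nat \<bar>w a\<bar> = j then sgn (w a) * v a else 0)"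

definition Inv :: "nat \<Rightarrow> (nat \<Rightarrow> int) \<Rightarrow> root set" where
  "Inv n w = {\<alpha> \<in> posroots n. \<exists>\<beta>\<in>posroots n. act n w (rvec \<alpha>) = (\<lambda>j. - rvec \<beta> j)}"

text \<open>W^{OG(k,2n+1)}: w = (y_1..y_{k-r}, -z_r..-z_1, v_1..v_{n-k}).\<close>
definition W_OG :: "nat \<Rightarrow> nat \<Rightarrow> (nat \<Rightarrow> int) set" where
  "W_OG k n = {w. (\<forall>a. a \<notin> {1..n} \<longrightarrow> w a = 0)
     \<and> bij_betw (\<lambda>a. nat \<bar>w a\<bar>) {1..n} {1..n}
     \<and> (\<exists>r \<le> k.
          (\<forall>a\<in>{1..k-r}. w a > 0)
        \<and> (\<forall>a\<in>{k-r+1..k}. w a < 0)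
        \<and> (\<forall>a\<in>{k+1..n}. w a > 0)
        \<and> (\<forall>a b. 1 \<le> a \<and> a < b \<and> b \<le> k - r \<longrightarrow> w a < w b)
        \<and> (\<forall>a b. k - r + 1 \<le> a \<and> a < b \<and> b \<le> k \<longrightarrow> \<bar>w a\<bar> > \<bar>w b\<bar>)
        \<and> (\<forall>a b. k + 1 \<le> a \<and> a < b \<and> b \<le> n \<longrightarrow> w a < w b))}"

definition Y_OG :: "nat \<Rightarrow> nat \<Rightarrow> root set set" where
  "Y_OG k n = Inv n ` W_OG k n"

definition base_region :: "nat \<Rightarrow> nat \<Rightarrow> root set" where
  "base_region k n = {RMinus a b | a b. 1 \<le> a \<and> a \<le> k \<and> k < b \<and> b \<le> n}
                   \<union> {RPlus a b | a b. 1 \<le> a \<and> a \<le> k \<and> k < b \<and> b \<le> n}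
                   \<union> {RShort a | a. 1 \<le> a \<and> a \<le> k}"

definition base_row :: "nat \<Rightarrow> nat \<Rightarrow> nat \<Rightarrow> root set" where
  "base_row k n i = {RMinus (k+1-i) b | b. k < b \<and> b \<le> n}
                  \<union> {RPlus (k+1-i) b | b. k < b \<and> b \<le> n}
                  \<union> {RShort (k+1-i)}"

definition top_region :: "nat \<Rightarrow> root set" where
  "top_region k = {RPlus a b | a b. 1 \<le> a \<and> a < b \<and> b \<le> k}"

definition lam1 :: "nat \<Rightarrow> nat \<Rightarrow> root set \<Rightarrow> nat \<Rightarrow> nat" where
  "lam1 k n S i = card (S \<inter> base_row k n i)"

definition lam2 :: "nat \<Rightarrow> root set \<Rightarrow> nat \<Rightarrow> nat" where
  "lam2 k S i = card {a. 1 \<le> a \<and> a < k + 1 - i \<and> RPlus a (k+1-i) \<in> S}"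

definition f_k :: "nat \<Rightarrow> nat \<Rightarrow> root set \<Rightarrow> nat list" where
  "f_k k n S = map (\<lambda>i. lam1 k n S i + lam2 k S i) [1..<k+1]"

definition Theta :: "nat \<Rightarrow> nat \<Rightarrow> root set set" where
  "Theta k n = {S. S \<subseteq> base_region k n \<union> top_region k
     \<and> lower_ideal n (base_region k n) (S \<inter> base_region k n)
     \<and> lower_ideal n (top_region k) (S \<inter> top_region k)
     \<and> (\<forall>a b. RPlus a b \<in> top_region k \<longrightarrow>
          (card (S \<inter> (base_row k n (k+1-a) \<union> base_row k n (k+1-b))) > 2*n+1-2*k
              \<longrightarrow> RPlus a b \<in> S)
        \<and> (card (S \<inter> (base_row k n (k+1-a) \<union> base_row k n (k+1-b))) < 2*n+1-2*k
              \<longrightarrow> RPlus a b \<notin> S))}"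

text \<open>P(m,n) with m = n-k: partitions (gamma_1 \<ge> ... \<ge> gamma_k \<ge> 0) given as the list
  [gamma_1, ..., gamma_k], gamma_1 \<le> 2n-k = n+m, strict decrease where gamma_i > m.\<close>
definition P_part :: "nat \<Rightarrow> nat \<Rightarrow> nat list set" where
  "P_part m n = {\<gamma>. length \<gamma> = n - m
     \<and> (\<forall>i. Suc i < length \<gamma> \<longrightarrow> \<gamma>!i \<ge> \<gamma>!(Suc i))
     \<and> (\<forall>i < length \<gamma>. \<gamma>!i \<le> n + m)
     \<and> (\<forall>i. Suc i < length \<gamma> \<longrightarrow> \<gamma>!i > m \<longrightarrow> \<gamma>!i > \<gamma>!(Suc i))}"

end

theory Submission
  imports Defs
begin

text \<open>
  A root is below another iff all its prefix coordinate sums are, so the base region is a grid: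
  row \<open>c\<close> consists of \<open>e_c - e_(k+1), ..., e_c - e_n, e_c, e_c + e_n, ..., e_c + e_(k+1)\<close> in
  increasing order, and row \<open>c'\<close> lies below row \<open>c\<close> when \<open>c' \<ge> c\<close>. Hence a member \<open>S\<close> of
  \<open>Theta\<close> is determined by its row lengths \<open>\<lambda>_c\<close>, which increase with \<open>c\<close>, and its top columns
  \<open>U_c = {a < c. e_a + e_c \<in> S}\<close>, which are final segments of \<open>{1..<c}\<close>. The entry of \<open>f_k S\<close>
  for row \<open>c\<close> is \<open>\<lambda>_c + |U_c|\<close>. The rule for the top region makes these entries a partition in
  \<open>P(n-k,n)\<close>, and, by induction on \<open>c\<close>, it lets one read off \<open>\<lambda>_c\<close> and \<open>U_c\<close> from them: so
  \<open>f_k\<close> is injective on \<open>Theta\<close>.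

  For \<open>w \<in> W_OG\<close>, row \<open>c\<close> of \<open>Inv w\<close> has length \<open>#{j. v_j < w(c)}\<close> if \<open>w(c) > 0\<close> and
  \<open>n - k + 1 + #{j. v_j > |w(c)|}\<close> if \<open>w(c) < 0\<close>; from this \<open>Inv w \<in> Theta\<close> follows, with
  entries \<open>2n - k + 1 - |w(c)|\<close> for the negative \<open>w(c)\<close>. Conversely every \<open>\<gamma> \<in> P(n-k,n)\<close>
  is \<open>f_k (Inv w)\<close> for an explicitly constructed \<open>w\<close>. Injectivity on \<open>Theta\<close> then gives
  \<open>Theta \<subseteq> Y_OG\<close>, and everything follows.
\<close>

section \<open>The root order via prefix sums\<close>

definition psum :: "root \<Rightarrow> nat \<Rightarrow> int" where
  "psum \<alpha> i = (\<Sum>j\<in>{1..i}. rvec \<alpha> j)"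

lemma sum_unitv: "sum (unitv a) {1..i} = (if 1 \<le> a \<and> a \<le> i then 1 else 0)"
proof -
  have "sum (unitv a) {1..i} = (\<Sum>j\<in>{1..i}. if j = a then 1 else 0)" unfolding unitv_def by (rule refl)
  also have "\<dots> = (if 1 \<le> a \<and> a \<le> i then 1 else 0)" by (simp add: sum.delta')
  finally show ?thesis .
qed

lemma sum_unitv_Suc_0: "sum (unitv a) {Suc 0..i} = (if 1 \<le> a \<and> a \<le> i then 1 else 0)"
  using sum_unitv[of a i] by simp

lemma psum_simps[simp]:
  "psum (RMinus a b) i = (if 1 \<le> a \<and> a \<le> i then 1 else 0) - (if 1 \<le> b \<and> b \<le> i then 1 else 0)"
  "psum (RPlus a b) i = (if 1 \<le> a \<and> a \<le> i then 1 else 0) + (if 1 \<le> b \<and> b \<le> i then 1 else 0)"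
  "psum (RShort a) i = (if 1 \<le> a \<and> a \<le> i then 1 else 0)"
  by (simp_all add: psum_def sum.distrib sum_subtractf sum_unitv sum_unitv_Suc_0)

lemma psum_simple:
  assumes "l \<in> {1..n}" "i \<in> {1..n}"
  shows "sum (simple n l) {1..i} = (if l = i then 1 else 0)"
proof (cases "l < n")
  case True
  then show ?thesis using assms
    by (simp add: simple_def sum_subtractf sum_unitv sum_unitv_Suc_0)
next
  case False
  then show ?thesis using assms
    by (simp add: simple_def sum_unitv sum_unitv_Suc_0)
qed

lemma psum_simple_comb:
  assumes "i \<in> {1..n}"
  shows "(\<Sum>j\<in>{1..i}. \<Sum>l\<in>{1..n}. int (c l) * simple n l j) = int (c i)"
proof -
  have "(\<Sum>j\<in>{1..i}. \<Sum>l\<in>{1..n}. int (c l) * simple n l j)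
      = (\<Sum>l\<in>{1..n}. int (c l) * (\<Sum>j\<in>{1..i}. simple n l j))"
    by (subst sum.swap) (simp add: sum_distrib_left)
  also have "\<dots> = (\<Sum>l\<in>{1..n}. if l = i then int (c l) else 0)"
    by (rule sum.cong) (use assms psum_simple[of _ n i] in \<open>auto\<close>)
  also have "\<dots> = int (c i)" using assms by (simp add: sum.delta')
  finally show ?thesis .
qed

lemma simple_comb_outside:
  assumes "j \<notin> {1..n}"
  shows "(\<Sum>l\<in>{1..n}. int (c l) * simple n l j) = 0"
  by (rule sum.neutral) (use assms in \<open>auto simp: simple_def unitv_def\<close>)

lemma eq_if_psum_eq:
  fixes f g :: "nat \<Rightarrow> int"
  assumes "\<And>j. j \<notin> {1..n} \<Longrightarrow> f j = 0" "\<And>j. j \<notin> {1..n} \<Longrightarrow> g j = 0"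
    and "\<And>i. i \<in> {1..n} \<Longrightarrow> (\<Sum>j\<in>{1..i}. f j) = (\<Sum>j\<in>{1..i}. g j)"
  shows "f = g"
proof
  fix j
  show "f j = g j"
  proof (cases "j \<in> {1..n}")
    case False then show ?thesis using assms by simp
  next
    case True
    then obtain q where q: "j = Suc q" by (cases j) auto
    have s1: "(\<Sum>j\<in>{1..j}. f j) = (\<Sum>j\<in>{1..q}. f j) + f j"
      using q by (simp add: sum.cl_ivl_Suc)
    have s2: "(\<Sum>j\<in>{1..j}. g j) = (\<Sum>j\<in>{1..q}. g j) + g j"
      using q by (simp add: sum.cl_ivl_Suc)
    have s3: "(\<Sum>j\<in>{1..q}. f j) = (\<Sum>j\<in>{1..q}. g j)"
    proof (cases "q = 0")
      case True then show ?thesis by simp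
    next
      case False then show ?thesis using True q assms(3)[of q] by auto
    qed
    show ?thesis using s1 s2 s3 assms(3)[OF True] by simp
  qed
qed

lemma root_le_iff_psum_le:
  assumes "\<And>j. j \<notin> {1..n} \<Longrightarrow> rvec \<alpha> j = 0" "\<And>j. j \<notin> {1..n} \<Longrightarrow> rvec \<beta> j = 0"
  shows "root_le n \<alpha> \<beta> \<longleftrightarrow> (\<forall>i\<in>{1..n}. psum \<alpha> i \<le> psum \<beta> i)"
proof
  assume "root_le n \<alpha> \<beta>"
  then obtain c where c: "(\<lambda>j. rvec \<beta> j - rvec \<alpha> j) = (\<lambda>j. \<Sum>i\<in>{1..n}. int (c i) * simple n i j)"
    unfolding root_le_def by blast
  show "\<forall>i\<in>{1..n}. psum \<alpha> i \<le> psum \<beta> i"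
  proof
    fix i assume i: "i \<in> {1..n}"
    have "psum \<beta> i - psum \<alpha> i = (\<Sum>j\<in>{1..i}. rvec \<beta> j - rvec \<alpha> j)"
      by (simp add: psum_def sum_subtractf)
    also have "\<dots> = (\<Sum>j\<in>{1..i}. \<Sum>l\<in>{1..n}. int (c l) * simple n l j)"
      using c by (metis (no_types, lifting))
    also have "\<dots> = int (c i)" using psum_simple_comb[OF i] .
    finally show "psum \<alpha> i \<le> psum \<beta> i" by simp
  qed
next
  assume H: "\<forall>i\<in>{1..n}. psum \<alpha> i \<le> psum \<beta> i"
  define c where "c l = nat (psum \<beta> l - psum \<alpha> l)" for l
  have "(\<lambda>j. rvec \<beta> j - rvec \<alpha> j) = (\<lambda>j. \<Sum>i\<in>{1..n}. int (c i) * simple n i j)"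
  proof (rule eq_if_psum_eq[where n=n])
    fix j assume "j \<notin> {1..n}" then show "rvec \<beta> j - rvec \<alpha> j = 0" using assms by simp
  next
    fix j assume "j \<notin> {1..n}" then show "(\<Sum>i\<in>{1..n}. int (c i) * simple n i j) = 0" by (rule simple_comb_outside)
  next
    fix i assume i: "i \<in> {1..n}"
    have "(\<Sum>j\<in>{1..i}. rvec \<beta> j - rvec \<alpha> j) = psum \<beta> i - psum \<alpha> i"
      by (simp add: psum_def sum_subtractf)
    also have "\<dots> = int (c i)" using H i by (simp add: c_def)
    finally show "(\<Sum>j\<in>{1..i}. rvec \<beta> j - rvec \<alpha> j) = (\<Sum>j\<in>{1..i}. \<Sum>l\<in>{1..n}. int (c l) * simple n l j)"
      using psum_simple_comb[OF i] by simp
  qed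
  then show "root_le n \<alpha> \<beta>" unfolding root_le_def by blast
qed

section \<open>Coordinates on the base region\<close>

text \<open>Row \<open>a\<close> of the base region, listed in increasing order: \<open>e_a - e_(k+p)\<close> for \<open>p \<le> n-k\<close>,
  then \<open>e_a\<close>, then \<open>e_a + e_b\<close> with \<open>b\<close> decreasing from \<open>n\<close> to \<open>k+1\<close>.\<close>
definition base_root :: "nat \<Rightarrow> nat \<Rightarrow> nat \<Rightarrow> nat \<Rightarrow> root" where
  "base_root k n a p = (if p \<le> n-k then RMinus a (k+p) else if p = n-k+1 then RShort a
                    else RPlus a (2*n-k+2-p))"

lemma base_root_outside:
  assumes "1 \<le> a" "a \<le> k" "1 \<le> p" "p \<le> 2*(n-k)+1" "k < n" "j \<notin> {1..n}"
  shows "rvec (base_root k n a p) j = 0"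
  using assms by (auto simp: base_root_def unitv_def)

lemma psum_base_root:
  assumes "1 \<le> a" "a \<le> k" "1 \<le> p" "p \<le> 2*(n-k)+1" "k < n"
  shows "psum (base_root k n a p) i = (if i < a then 0 else if p \<le> n-k then (if i < k+p then 1 else 0)
     else if p = n-k+1 then 1 else (if i < 2*n-k+2-p then 1 else 2))"
proof -
  consider "p \<le> n-k" | "p = n-k+1" | "p > n-k+1" by linarith
  then show ?thesis
  proof cases
    case 1 then show ?thesis using assms by (simp add: base_root_def)
  next
    case 2 then show ?thesis using assms by (simp add: base_root_def)
  next
    case 3
    have "1 \<le> 2*n-k+2-p" "2*n-k+2-p \<le> n" "a < 2*n-k+2-p" using 3 assms by linarith+
    then show ?thesis using assms 3 by (simp add: base_root_def)
  qed
qed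

lemma psum_base_root_mono:
  assumes "1 \<le> a" "a \<le> k" "1 \<le> p" "p \<le> 2*(n-k)+1" "1 \<le> p'" "p' \<le> p" "k < n"
  shows "psum (base_root k n a p') i \<le> psum (base_root k n a p) i"
proof -
  have p': "p' \<le> 2*(n-k)+1" using assms by linarith
  note e = psum_base_root[OF assms(1-4,7)] psum_base_root[OF assms(1,2,5) p' assms(7)]
  have "2*n-k+2-p \<le> 2*n-k+2-p'" using assms by linarith
  then show ?thesis unfolding e using assms by auto
qed

lemma psum_base_root_antimono_row:
  assumes "1 \<le> a" "a \<le> a'" "a' \<le> k" "1 \<le> p" "p \<le> 2*(n-k)+1" "k < n"
  shows "psum (base_root k n a' p) i \<le> psum (base_root k n a p) i"
proof -
  have a: "1 \<le> a'" "a \<le> k" using assms by linarith+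
  note e = psum_base_root[OF assms(1) a(2) assms(4,5,6)] psum_base_root[OF a(1) assms(3,4,5,6)]
  show ?thesis unfolding e using assms by auto
qed

lemma le_pos_if_psum_base_root_le:
  assumes "1 \<le> a" "a \<le> k" "1 \<le> p" "p \<le> 2*(n-k)+1"
    "1 \<le> a'" "a' \<le> k" "1 \<le> p'" "p' \<le> 2*(n-k)+1" "k < n"
    and H: "\<And>i. i \<in> {1..n} \<Longrightarrow> psum (base_root k n a' p') i \<le> psum (base_root k n a p) i"
  shows "p' \<le> p"
proof (rule ccontr)
  assume np: "\<not> p' \<le> p"
  consider "p \<le> n - k" | "p = n-k+1" | "p > n-k+1" by linarith
  then show False
  proof cases
    case 1
    have "psum (base_root k n a p) (k+p) = 0" using 1 assms by (simp add: psum_base_root)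
    moreover have "psum (base_root k n a' p') (k+p) \<ge> 1" using 1 assms np by (simp add: psum_base_root)
    moreover have "k + p \<in> {1..n}" using 1 assms by simp
    ultimately show False using H[of "k+p"] by simp
  next
    case 2
    have "psum (base_root k n a p) n = 1" using 2 assms by (simp add: psum_base_root)
    moreover have "psum (base_root k n a' p') n = 2" using 2 assms np by (simp add: psum_base_root)
    ultimately show False using H[of n] 2 assms by simp
  next
    case 3
    define i where "i = 2*n-k+2-p'"
    have i: "1 \<le> i" "i \<le> n" "a \<le> i" "a' \<le> i" "i < 2*n-k+2-p"
      using 3 assms np unfolding i_def by linarith+
    have "psum (base_root k n a p) i = 1" using 3 assms i by (simp add: psum_base_root)
    moreover have "psum (base_root k n a' p') i = 2" using 3 assms np i by (simp add: psum_base_root i_def)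
    ultimately show False using H[of i] i by simp
  qed
qed

lemma root_le_base_root_iff:
  assumes "1 \<le> a" "a \<le> k" "1 \<le> p" "p \<le> 2*(n-k)+1"
    "1 \<le> a'" "a' \<le> k" "1 \<le> p'" "p' \<le> 2*(n-k)+1" "k < n"
  shows "root_le n (base_root k n a' p') (base_root k n a p) \<longleftrightarrow> a \<le> a' \<and> p' \<le> p"
proof -
  have iff: "root_le n (base_root k n a' p') (base_root k n a p) \<longleftrightarrow>
     (\<forall>i\<in>{1..n}. psum (base_root k n a' p') i \<le> psum (base_root k n a p) i)"
    by (rule root_le_iff_psum_le) (use assms base_root_outside in auto)
  show ?thesis
  proof
    assume "root_le n (base_root k n a' p') (base_root k n a p)"
    then have H: "\<And>i. i \<in> {1..n} \<Longrightarrow> psum (base_root k n a' p') i \<le> psum (base_root k n a p) i"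
      using iff by simp
    have "a \<le> a'"
    proof (rule ccontr)
      assume "\<not> a \<le> a'"
      then show False using H[of a'] assms by (simp add: psum_base_root split: if_splits)
    qed
    then show "a \<le> a' \<and> p' \<le> p" using le_pos_if_psum_base_root_le[OF assms H] by simp
  next
    assume le: "a \<le> a' \<and> p' \<le> p"
    have "psum (base_root k n a' p') i \<le> psum (base_root k n a p) i" for i
    proof -
      have "psum (base_root k n a' p') i \<le> psum (base_root k n a' p) i"
        by (rule psum_base_root_mono) (use assms le in auto)
      also have "\<dots> \<le> psum (base_root k n a p) i"
        by (rule psum_base_root_antimono_row) (use assms le in auto)
      finally show ?thesis .
    qed
    then show "root_le n (base_root k n a' p') (base_root k n a p)" using iff by simp
  qed
qed

lemma root_le_RPlus_iff:
  assumes "1 \<le> a" "a < c" "c \<le> n" "1 \<le> a'" "a' < c'" "c' \<le> n"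
  shows "root_le n (RPlus a' c') (RPlus a c) \<longleftrightarrow> a \<le> a' \<and> c \<le> c'"
proof -
  have iff: "root_le n (RPlus a' c') (RPlus a c) \<longleftrightarrow>
     (\<forall>i\<in>{1..n}. psum (RPlus a' c') i \<le> psum (RPlus a c) i)"
    by (rule root_le_iff_psum_le) (use assms in \<open>auto simp: unitv_def\<close>)
  show ?thesis
  proof
    assume "root_le n (RPlus a' c') (RPlus a c)"
    then have H: "\<forall>i\<in>{1..n}. psum (RPlus a' c') i \<le> psum (RPlus a c) i" using iff by simp
    have "a \<le> a'"
    proof (rule ccontr)
      assume "\<not> a \<le> a'"
      then have "psum (RPlus a' c') a' \<ge> 1" "psum (RPlus a c) a' = 0" using assms by auto
      then show False using H[rule_format, of a'] assms by auto
    qed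
    moreover have "c \<le> c'"
    proof (rule ccontr)
      assume "\<not> c \<le> c'"
      then have "psum (RPlus a' c') c' = 2" "psum (RPlus a c) c' \<le> 1" using assms by auto
      then show False using H[rule_format, of c'] assms by auto
    qed
    ultimately show "a \<le> a' \<and> c \<le> c'" by simp
  next
    assume le: "a \<le> a' \<and> c \<le> c'"
    have "\<forall>i\<in>{1..n}. psum (RPlus a' c') i \<le> psum (RPlus a c) i"
    proof
      fix i assume "i \<in> {1..n}"
      show "psum (RPlus a' c') i \<le> psum (RPlus a c) i" using le assms by simp
    qed
    then show "root_le n (RPlus a' c') (RPlus a c)" using iff by simp
  qed
qed

lemma base_root_inj:
  assumes "1 \<le> p" "p \<le> 2*(n-k)+1" "1 \<le> p'" "p' \<le> 2*(n-k)+1" "k < n"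
    and "base_root k n a p = base_root k n a' p'"
  shows "a = a' \<and> p = p'"
  using assms by (auto simp: base_root_def split: if_splits; linarith)

lemma base_root_in_base_region:
  assumes "1 \<le> a" "a \<le> k" "1 \<le> p" "p \<le> 2*(n-k)+1" "k < n"
  shows "base_root k n a p \<in> base_region k n"
  using assms by (auto simp: base_root_def base_region_def)

lemma base_region_imp_base_root:
  assumes "\<alpha> \<in> base_region k n" "k < n"
  shows "\<exists>a p. 1 \<le> a \<and> a \<le> k \<and> 1 \<le> p \<and> p \<le> 2*(n-k)+1 \<and> \<alpha> = base_root k n a p"
proof -
  consider (m) a b where "\<alpha> = RMinus a b" "1 \<le> a" "a \<le> k" "k < b" "b \<le> n"
    | (p) a b where "\<alpha> = RPlus a b" "1 \<le> a" "a \<le> k" "k < b" "b \<le> n"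
    | (s) a where "\<alpha> = RShort a" "1 \<le> a" "a \<le> k"
    using assms(1) unfolding base_region_def by blast
  then show ?thesis
  proof cases
    case m
    then show ?thesis using assms
      by (intro exI[of _ a] exI[of _ "b-k"]) (auto simp: base_root_def)
  next
    case p
    then show ?thesis using assms
      by (intro exI[of _ a] exI[of _ "2*n-k+2-b"]) (auto simp: base_root_def)
  next
    case s
    then show ?thesis using assms
      by (intro exI[of _ a] exI[of _ "n-k+1"]) (auto simp: base_root_def)
  qed
qed

lemma base_row_eq_image:
  assumes "1 \<le> i" "i \<le> k" "k < n"
  shows "base_row k n i = base_root k n (k+1-i) ` {1..2*(n-k)+1}"
proof
  show "base_row k n i \<subseteq> base_root k n (k+1-i) ` {1..2*(n-k)+1}"
  proof
    fix \<alpha> assume "\<alpha> \<in> base_row k n i"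
    then have "\<alpha> \<in> base_region k n" and ai: "\<exists>b. \<alpha> = RMinus (k+1-i) b \<or> \<alpha> = RPlus (k+1-i) b \<or> \<alpha> = RShort (k+1-i)"
      using assms unfolding base_row_def base_region_def by auto
    then obtain a p where ap: "1 \<le> a" "a \<le> k" "1 \<le> p" "p \<le> 2*(n-k)+1" "\<alpha> = base_root k n a p"
      using base_region_imp_base_root assms by blast
    then have "a = k+1-i" using ai by (auto simp: base_root_def split: if_splits)
    then show "\<alpha> \<in> base_root k n (k+1-i) ` {1..2*(n-k)+1}" using ap by auto
  qed
next
  show "base_root k n (k+1-i) ` {1..2*(n-k)+1} \<subseteq> base_row k n i"
    using assms by (auto simp: base_root_def base_row_def)
qed

lemma RPlus_in_top_region: "1 \<le> a \<Longrightarrow> a < c \<Longrightarrow> c \<le> k \<Longrightarrow> RPlus a c \<in> top_region k"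
  by (auto simp: top_region_def)

definition row_count :: "nat \<Rightarrow> nat \<Rightarrow> root set \<Rightarrow> nat \<Rightarrow> nat" where
  "row_count k n S a = card {p \<in> {1..2*(n-k)+1}. base_root k n a p \<in> S}"

definition top_column :: "root set \<Rightarrow> nat \<Rightarrow> nat set" where
  "top_column S c = {a. 1 \<le> a \<and> a < c \<and> RPlus a c \<in> S}"

lemma top_column_subset: "top_column S c \<subseteq> {1..<c}" by (auto simp: top_column_def)
lemma finite_top_column[simp]: "finite (top_column S c)" using top_column_subset finite_subset by blast

text \<open>The entry of \<open>f_k k n S\<close> belonging to row \<open>c\<close>, i.e.\ \<open>\<gamma>_(k+1-c)\<close>.\<close>
abbreviation f_k_entry :: "nat \<Rightarrow> nat \<Rightarrow> root set \<Rightarrow> nat \<Rightarrow> nat" where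
  "f_k_entry k n S c \<equiv> row_count k n S c + card (top_column S c)"

lemma card_Int_base_row:
  assumes "k < n"
  shows "card (S \<inter> base_root k n a ` {1..2*(n-k)+1}) = row_count k n S a"
proof -
  have "S \<inter> base_root k n a ` {1..2*(n-k)+1} = base_root k n a ` {p \<in> {1..2*(n-k)+1}. base_root k n a p \<in> S}"
    by auto
  moreover have "inj_on (base_root k n a) {p \<in> {1..2*(n-k)+1}. base_root k n a p \<in> S}"
    by (rule inj_onI) (use base_root_inj assms in auto)
  ultimately show ?thesis unfolding row_count_def by (simp add: card_image)
qed

lemma lam1_eq_row_count:
  assumes "1 \<le> i" "i \<le> k" "k < n"
  shows "lam1 k n S i = row_count k n S (k+1-i)"
  unfolding lam1_def base_row_eq_image[OF assms] using card_Int_base_row[OF assms(3)] .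

lemma length_f_k: "length (f_k k n S) = k"
  by (simp add: f_k_def)

lemma nth_f_k:
  assumes "j < k" "k < n"
  shows "f_k k n S ! j = row_count k n S (k-j) + card (top_column S (k-j))"
proof -
  have "f_k k n S ! j = lam1 k n S (Suc j) + lam2 k S (Suc j)"
    using assms by (simp add: f_k_def nth_map_upt del: upt_Suc)
  also have "lam1 k n S (Suc j) = row_count k n S (k-j)"
    using lam1_eq_row_count[of "Suc j" k n S] assms by simp
  also have "lam2 k S (Suc j) = card (top_column S (k-j))"
    using assms by (simp add: lam2_def top_column_def)
  finally show ?thesis .
qed

lemma row_count_le: "row_count k n S a \<le> 2*(n-k)+1"
proof -
  have "row_count k n S a \<le> card {1..2*(n-k)+1}"
    unfolding row_count_def by (rule card_mono) auto
  then show ?thesis by simp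
qed

lemma card_Int_two_base_rows:
  assumes "1 \<le> a" "a < c" "c \<le> k" "k < n"
  shows "card (S \<inter> (base_row k n (k+1-a) \<union> base_row k n (k+1-c))) = row_count k n S a + row_count k n S c"
proof -
  have ra: "base_row k n (k+1-a) = base_root k n a ` {1..2*(n-k)+1}"
    using base_row_eq_image[of "k+1-a" k n] assms by simp
  have rc: "base_row k n (k+1-c) = base_root k n c ` {1..2*(n-k)+1}"
    using base_row_eq_image[of "k+1-c" k n] assms by simp
  have disj: "(S \<inter> base_root k n a ` {1..2*(n-k)+1}) \<inter> (S \<inter> base_root k n c ` {1..2*(n-k)+1}) = {}"
    using base_root_inj[of _ n k _ a c] assms by fastforce
  have "S \<inter> (base_row k n (k+1-a) \<union> base_row k n (k+1-c))
     = (S \<inter> base_root k n a ` {1..2*(n-k)+1}) \<union> (S \<inter> base_root k n c ` {1..2*(n-k)+1})"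
    unfolding ra rc by blast
  then show ?thesis using disj card_Int_base_row[OF assms(4)] by (simp add: card_Un_disjoint)
qed

lemma lower_ideal_base_regionI:
  assumes "T \<subseteq> base_region k n" "k < n"
    and mem: "\<And>a p. 1 \<le> a \<Longrightarrow> a \<le> k \<Longrightarrow> 1 \<le> p \<Longrightarrow> p \<le> 2*(n-k)+1 \<Longrightarrow> base_root k n a p \<in> T \<longleftrightarrow> p \<le> lam a"
    and mono: "\<And>a a'. 1 \<le> a \<Longrightarrow> a \<le> a' \<Longrightarrow> a' \<le> k \<Longrightarrow> lam a \<le> lam a'"
  shows "lower_ideal n (base_region k n) T"
  unfolding lower_ideal_def
proof (intro conjI ballI impI)
  show "T \<subseteq> base_region k n" by (rule assms(1))
next
  fix \<alpha> \<beta> assume a: "\<alpha> \<in> T" and b: "\<beta> \<in> base_region k n" and le: "root_le n \<beta> \<alpha>"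
  obtain a p where ap: "1 \<le> a" "a \<le> k" "1 \<le> p" "p \<le> 2*(n-k)+1" "\<alpha> = base_root k n a p"
    using base_region_imp_base_root[OF _ assms(2)] a assms(1) by blast
  obtain a' p' where ap': "1 \<le> a'" "a' \<le> k" "1 \<le> p'" "p' \<le> 2*(n-k)+1" "\<beta> = base_root k n a' p'"
    using base_region_imp_base_root[OF b assms(2)] by blast
  have "a \<le> a' \<and> p' \<le> p" using root_le_base_root_iff[of a k p n a' p'] ap ap' le assms(2) by simp
  moreover have "p \<le> lam a" using mem[OF ap(1-4)] a ap(5) by simp
  ultimately have "p' \<le> lam a'" using mono[of a a'] ap ap' by simp
  then show "\<beta> \<in> T" using mem[OF ap'(1-4)] ap'(5) by simp
qed

section \<open>Members of \<open>Theta\<close>\<close>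

lemma down_closed_eq_interval:
  fixes P :: "nat set"
  assumes "P \<subseteq> {1..N}" "\<And>p p'. p \<in> P \<Longrightarrow> 1 \<le> p' \<Longrightarrow> p' \<le> p \<Longrightarrow> p' \<in> P"
  shows "P = {1..card P}"
proof (cases "P = {}")
  case True then show ?thesis by simp
next
  case False
  have fin: "finite P" using assms(1) finite_subset by blast
  define M where "M = Max P"
  have "M \<in> P" using False fin M_def by simp
  have "P = {1..M}"
  proof
    show "P \<subseteq> {1..M}" using assms(1) fin M_def by auto
    show "{1..M} \<subseteq> P" using assms(2) \<open>M \<in> P\<close> by auto
  qed
  then show ?thesis by simp
qed

lemma up_closed_eq_interval:
  fixes N :: "nat set"
  assumes "N \<subseteq> {1..k}" "\<And>c c'. c \<in> N \<Longrightarrow> c \<le> c' \<Longrightarrow> c' \<le> k \<Longrightarrow> c' \<in> N"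
  shows "N = {k - card N + 1..k}"
proof (cases "N = {}")
  case True then show ?thesis by simp
next
  case False
  have fin: "finite N" using assms(1) finite_subset by blast
  define M where "M = Min N"
  have "M \<in> N" using False fin M_def by simp
  then have Mk: "1 \<le> M" "M \<le> k" using assms(1) by auto
  have "N = {M..k}"
  proof
    show "N \<subseteq> {M..k}" using assms(1) fin M_def by auto
    show "{M..k} \<subseteq> N" using assms(2) \<open>M \<in> N\<close> by auto
  qed
  then show ?thesis using Mk by simp
qed

locale Theta_member =
  fixes k n :: nat and S :: "root set"
  assumes k_less_n: "k < n" and member: "S \<in> Theta k n"
begin

lemma subset_regions: "S \<subseteq> base_region k n \<union> top_region k"
  using member by (simp add: Theta_def)

lemma lower_ideal_base: "lower_ideal n (base_region k n) (S \<inter> base_region k n)"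
  using member by (simp add: Theta_def)

lemma lower_ideal_top: "lower_ideal n (top_region k) (S \<inter> top_region k)"
  using member by (simp add: Theta_def)

lemma top_rule: "RPlus a b \<in> top_region k \<Longrightarrow>
   (card (S \<inter> (base_row k n (k+1-a) \<union> base_row k n (k+1-b))) > 2*n+1-2*k \<longrightarrow> RPlus a b \<in> S)
 \<and> (card (S \<inter> (base_row k n (k+1-a) \<union> base_row k n (k+1-b))) < 2*n+1-2*k \<longrightarrow> RPlus a b \<notin> S)"
  using member by (simp add: Theta_def)

lemma row_members:
  assumes "1 \<le> a" "a \<le> k"
  shows "{p \<in> {1..2*(n-k)+1}. base_root k n a p \<in> S} = {1..row_count k n S a}"
  unfolding row_count_def
proof (rule down_closed_eq_interval)
  show "{p \<in> {1..2*(n-k)+1}. base_root k n a p \<in> S} \<subseteq> {1..2*(n-k)+1}" by auto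
next
  fix p p' assume p: "p \<in> {p \<in> {1..2*(n-k)+1}. base_root k n a p \<in> S}" and p': "1 \<le> p'" "p' \<le> p"
  have le: "root_le n (base_root k n a p') (base_root k n a p)"
    using root_le_base_root_iff[of a k p n a p'] assms p p' k_less_n by auto
  have "base_root k n a p \<in> S \<inter> base_region k n" using p base_root_in_base_region assms k_less_n by auto
  moreover have "base_root k n a p' \<in> base_region k n" using p p' base_root_in_base_region assms k_less_n by auto
  ultimately have "base_root k n a p' \<in> S" using lower_ideal_base le unfolding lower_ideal_def by blast
  then show "p' \<in> {p \<in> {1..2*(n-k)+1}. base_root k n a p \<in> S}" using p p' by auto
qed

lemma base_root_mem_iff:
  assumes "1 \<le> a" "a \<le> k" "1 \<le> p" "p \<le> 2*(n-k)+1"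
  shows "base_root k n a p \<in> S \<longleftrightarrow> p \<le> row_count k n S a"
proof -
  have "base_root k n a p \<in> S \<longleftrightarrow> p \<in> {p \<in> {1..2*(n-k)+1}. base_root k n a p \<in> S}" using assms by auto
  also have "\<dots> \<longleftrightarrow> p \<le> row_count k n S a" unfolding row_members[OF assms(1,2)] using assms by auto
  finally show ?thesis .
qed

lemma row_count_mono:
  assumes "1 \<le> a" "a \<le> a'" "a' \<le> k"
  shows "row_count k n S a \<le> row_count k n S a'"
proof (cases "row_count k n S a = 0")
  case True then show ?thesis by simp
next
  case False
  define p where "p = row_count k n S a"
  have p: "1 \<le> p" "p \<le> 2*(n-k)+1" using False row_count_le p_def by (auto simp del: One_nat_def)
  have "base_root k n a p \<in> S" using base_root_mem_iff[of a p] assms p p_def by auto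
  moreover have "root_le n (base_root k n a' p) (base_root k n a p)"
    using root_le_base_root_iff[of a k p n a' p] assms p k_less_n by auto
  moreover have "base_root k n a' p \<in> base_region k n" using base_root_in_base_region assms p k_less_n by auto
  moreover have "base_root k n a p \<in> base_region k n" using base_root_in_base_region assms p k_less_n by auto
  ultimately have "base_root k n a' p \<in> S" using lower_ideal_base unfolding lower_ideal_def by blast
  then show ?thesis using base_root_mem_iff[of a' p] assms p p_def by auto
qed

lemma top_column_memI:
  assumes "1 \<le> a" "a < c" "c \<le> k" "row_count k n S a + row_count k n S c > 2*(n-k)+1"
  shows "a \<in> top_column S c"
proof -
  have "2*n+1-2*k = 2*(n-k)+1" using k_less_n by simp
  then show ?thesis using top_rule[OF RPlus_in_top_region[OF assms(1-3)]] card_Int_two_base_rows[OF assms(1-3) k_less_n] assms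
    by (auto simp: top_column_def)
qed

lemma top_column_not_memI:
  assumes "1 \<le> a" "a < c" "c \<le> k" "row_count k n S a + row_count k n S c < 2*(n-k)+1"
  shows "a \<notin> top_column S c"
proof -
  have "2*n+1-2*k = 2*(n-k)+1" using k_less_n by simp
  then show ?thesis using top_rule[OF RPlus_in_top_region[OF assms(1-3)]] card_Int_two_base_rows[OF assms(1-3) k_less_n] assms
    by (auto simp: top_column_def)
qed

lemma RPlus_down_closed:
  assumes "RPlus a c \<in> S" "1 \<le> a" "a < c" "c \<le> k" "a \<le> a'" "a' < c'" "c \<le> c'" "c' \<le> k"
  shows "RPlus a' c' \<in> S"
proof -
  have "root_le n (RPlus a' c') (RPlus a c)" using root_le_RPlus_iff[of a c n a' c'] assms k_less_n by auto
  moreover have "RPlus a c \<in> S \<inter> top_region k" using assms RPlus_in_top_region by auto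
  moreover have "RPlus a' c' \<in> top_region k" using assms RPlus_in_top_region by auto
  ultimately show ?thesis using lower_ideal_top unfolding lower_ideal_def by blast
qed

lemma top_column_up_closed:
  assumes "c \<le> k" "a \<in> top_column S c" "a < a'" "a' < c"
  shows "a' \<in> top_column S c"
  using RPlus_down_closed[of a c a' c] assms by (auto simp: top_column_def)

lemma top_column_mono:
  assumes "2 \<le> c" "c \<le> k"
  shows "top_column S (c-1) \<subseteq> top_column S c"
  using RPlus_down_closed[of _ "c-1" _ c] assms by (auto simp: top_column_def)

lemma top_column_empty:
  assumes "1 \<le> c" "c \<le> k" "row_count k n S c \<le> n-k"
  shows "top_column S c = {}"
proof -
  have "a \<notin> top_column S c" if "a \<in> top_column S c" for a
  proof -
    have a: "1 \<le> a" "a < c" using that by (auto simp: top_column_def)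
    have "row_count k n S a \<le> row_count k n S c" using row_count_mono a assms by simp
    then show ?thesis using top_column_not_memI[of a c] a assms by simp
  qed
  then show ?thesis by blast
qed

lemma mem_cases: "\<alpha> \<in> S \<Longrightarrow> (\<exists>a p. 1 \<le> a \<and> a \<le> k \<and> 1 \<le> p \<and> p \<le> 2*(n-k)+1 \<and> \<alpha> = base_root k n a p)
    \<or> (\<exists>a c. 1 \<le> a \<and> a < c \<and> c \<le> k \<and> \<alpha> = RPlus a c)"
  using subset_regions base_region_imp_base_root[OF _ k_less_n] by (auto simp: top_region_def)

lemma f_k_entry_mono:
  assumes "2 \<le> c" "c \<le> k"
  shows "f_k_entry k n S (c-1) \<le> f_k_entry k n S c"
proof -
  have "row_count k n S (c-1) \<le> row_count k n S c" using row_count_mono assms by simp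
  moreover have "card (top_column S (c-1)) \<le> card (top_column S c)" using top_column_mono[OF assms] by (simp add: card_mono)
  ultimately show ?thesis by simp
qed

lemma f_k_entry_le:
  assumes "1 \<le> c" "c \<le> k"
  shows "f_k_entry k n S c \<le> n + (n-k)"
proof -
  have "card (top_column S c) \<le> card {1..<c}" using top_column_subset by (rule card_mono[rotated]) simp
  then have "card (top_column S c) \<le> c - 1" by simp
  moreover have "row_count k n S c \<le> 2*(n-k)+1" by (rule row_count_le)
  ultimately show ?thesis using assms k_less_n by linarith
qed

lemma f_k_entry_strict:
  assumes "2 \<le> c" "c \<le> k" "f_k_entry k n S c > n-k"
  shows "f_k_entry k n S (c-1) < f_k_entry k n S c"
proof (cases "row_count k n S c \<le> n-k")
  case True
  then have "top_column S c = {}" using top_column_empty assms by simp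
  then show ?thesis using assms True by simp
next
  case False
  show ?thesis
  proof (cases "row_count k n S (c-1) \<le> n-k")
    case True
    then have "top_column S (c-1) = {}" using top_column_empty assms by simp
    then show ?thesis using False True by simp
  next
    case F2: False
    have "c-1 \<in> top_column S c" using top_column_memI[of "c-1" c] assms False F2 by simp
    moreover have "c-1 \<notin> top_column S (c-1)" by (simp add: top_column_def)
    ultimately have "top_column S (c-1) \<subset> top_column S c" using top_column_mono[OF assms(1,2)] by blast
    then have "card (top_column S (c-1)) < card (top_column S c)" by (simp add: psubset_card_mono)
    moreover have "row_count k n S (c-1) \<le> row_count k n S c" using row_count_mono assms by simp
    ultimately show ?thesis by simp
  qed
qed

lemma f_k_in_P_part: "f_k k n S \<in> P_part (n-k) n"
proof -
  have len: "length (f_k k n S) = n - (n-k)" using length_f_k k_less_n by simp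
  have nth: "f_k k n S ! j = f_k_entry k n S (k-j)" if "j < k" for j using nth_f_k that k_less_n by simp
  show ?thesis unfolding P_part_def
  proof (intro CollectI conjI allI impI)
    show "length (f_k k n S) = n - (n-k)" by (rule len)
  next
    fix i assume "Suc i < length (f_k k n S)"
    then have i: "Suc i < k" using length_f_k by simp
    have e: "k - Suc i = k - i - 1" by arith
    have "f_k_entry k n S (k - i - 1) \<le> f_k_entry k n S (k-i)" using f_k_entry_mono[of "k-i"] i by simp
    then show "f_k k n S ! Suc i \<le> f_k k n S ! i" using nth[of i] nth[of "Suc i"] i unfolding e by linarith
  next
    fix i assume "i < length (f_k k n S)"
    then have i: "i < k" using length_f_k by simp
    show "f_k k n S ! i \<le> n + (n-k)" using nth[of i] i f_k_entry_le[of "k-i"] by simp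
  next
    fix i assume "Suc i < length (f_k k n S)" "n - k < f_k k n S ! i"
    then have i: "Suc i < k" and g: "n-k < f_k_entry k n S (k-i)" using length_f_k nth[of i] by auto
    have e: "k - Suc i = k - i - 1" by arith
    have "f_k_entry k n S (k - i - 1) < f_k_entry k n S (k-i)" using f_k_entry_strict[of "k-i"] i g by simp
    then show "f_k k n S ! Suc i < f_k k n S ! i" using nth[of i] nth[of "Suc i"] i unfolding e by linarith
  qed
qed

lemma top_column_eq_interval:
  assumes "c \<le> k"
  shows "top_column S c = {c - 1 - card (top_column S c) + 1..c - 1}"
proof (rule up_closed_eq_interval)
  show "top_column S c \<subseteq> {1..c - 1}" using top_column_subset by fastforce
  show "a' \<in> top_column S c" if "a \<in> top_column S c" "a \<le> a'" "a' \<le> c - 1" for a a'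
    using top_column_up_closed[OF assms that(1)] that top_column_subset[of S c]
    by (cases "a = a'") force+
qed

end

text \<open>Comparing two members row by row: if they agree on the rows below \<open>c\<close> and on the
  entry of row \<open>c\<close>, a longer row \<open>c\<close> in \<open>S2\<close> would need a shorter top column, which the
  rule of the top region forbids.\<close>
lemma row_count_not_less:
  assumes S1: "Theta_member k n S1" and S2: "Theta_member k n S2" and c: "1 \<le> c" "c \<le> k"
    and below: "\<And>a. 1 \<le> a \<Longrightarrow> a < c \<Longrightarrow> row_count k n S1 a = row_count k n S2 a"
    and entry: "f_k_entry k n S1 c = f_k_entry k n S2 c"
  shows "\<not> row_count k n S1 c < row_count k n S2 c"
proof
  interpret X: Theta_member k n S1 by (rule S1)
  interpret Y: Theta_member k n S2 by (rule S2)
  assume lt: "row_count k n S1 c < row_count k n S2 c"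
  then have "card (top_column S2 c) < card (top_column S1 c)" using entry by simp
  then have "\<not> top_column S1 c \<subseteq> top_column S2 c" by (meson card_mono finite_top_column leD)
  then obtain a where a: "a \<in> top_column S1 c" "a \<notin> top_column S2 c" by blast
  then have a1: "1 \<le> a" "a < c" by (auto simp: top_column_def)
  have "\<not> row_count k n S1 a + row_count k n S1 c < 2*(n-k)+1"
    using X.top_column_not_memI[of a c] a a1 c by auto
  moreover have "\<not> row_count k n S2 a + row_count k n S2 c > 2*(n-k)+1"
    using Y.top_column_memI[of a c] a a1 c by auto
  ultimately show False using below[OF a1] lt by simp
qed

lemma row_count_eq_if_f_k_eq:
  assumes S: "Theta_member k n S" and S': "Theta_member k n S'" and eq: "f_k k n S = f_k k n S'"
    and "1 \<le> c" "c \<le> k"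
  shows "row_count k n S c = row_count k n S' c"
  using assms(4,5)
proof (induction c rule: less_induct)
  case (less c)
  have k_less_n: "k < n" using S by (simp add: Theta_member_def)
  have "f_k_entry k n S c = f_k_entry k n S' c"
    using arg_cong[OF eq, of "\<lambda>l. l ! (k-c)"] nth_f_k[of "k-c" k n] less.prems k_less_n by simp
  moreover have "row_count k n S a = row_count k n S' a" if "1 \<le> a" "a < c" for a
    using less.IH[of a] that less.prems by simp
  ultimately show ?case
    using row_count_not_less[OF S S' less.prems] row_count_not_less[OF S' S less.prems]
    by (metis linorder_neqE_nat)
qed

lemma top_column_eq_if_f_k_eq:
  assumes S: "Theta_member k n S" and S': "Theta_member k n S'" and eq: "f_k k n S = f_k k n S'"
    and c: "1 \<le> c" "c \<le> k"
  shows "top_column S c = top_column S' c"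
proof -
  have k_less_n: "k < n" using S by (simp add: Theta_member_def)
  have "f_k_entry k n S c = f_k_entry k n S' c"
    using arg_cong[OF eq, of "\<lambda>l. l ! (k-c)"] nth_f_k[of "k-c" k n] c k_less_n by simp
  then have "card (top_column S c) = card (top_column S' c)"
    using row_count_eq_if_f_k_eq[OF assms] by simp
  then show ?thesis
    using Theta_member.top_column_eq_interval[OF S c(2)] Theta_member.top_column_eq_interval[OF S' c(2)]
    by metis
qed

lemma Theta_member_subset:
  assumes S: "Theta_member k n S" and S': "Theta_member k n S'"
    and rows: "\<And>c. 1 \<le> c \<Longrightarrow> c \<le> k \<Longrightarrow> row_count k n S c = row_count k n S' c"
    and columns: "\<And>c. 1 \<le> c \<Longrightarrow> c \<le> k \<Longrightarrow> top_column S c = top_column S' c"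
  shows "S \<subseteq> S'"
proof
  interpret X: Theta_member k n S by (rule S)
  interpret Y: Theta_member k n S' by (rule S')
  fix \<alpha> assume \<alpha>: "\<alpha> \<in> S"
  from X.mem_cases[OF \<alpha>] show "\<alpha> \<in> S'"
  proof (elim disjE exE conjE)
    fix a p assume "1 \<le> a" "a \<le> k" "1 \<le> p" "p \<le> 2*(n-k)+1" "\<alpha> = base_root k n a p"
    then show ?thesis using X.base_root_mem_iff Y.base_root_mem_iff \<alpha> rows by simp
  next
    fix a c assume ac: "1 \<le> a" "a < c" "c \<le> k" "\<alpha> = RPlus a c"
    then have "a \<in> top_column S c" using \<alpha> by (simp add: top_column_def)
    then have "a \<in> top_column S' c" using columns[of c] ac by simp
    then show ?thesis using ac by (simp add: top_column_def)
  qed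
qed

lemma f_k_inj_on_Theta:
  assumes "Theta_member k n S" "Theta_member k n S'" "f_k k n S = f_k k n S'"
  shows "S = S'"
  using Theta_member_subset[OF assms(1,2)] Theta_member_subset[OF assms(2,1)]
    row_count_eq_if_f_k_eq[OF assms] top_column_eq_if_f_k_eq[OF assms]
    row_count_eq_if_f_k_eq[OF assms(2,1) assms(3)[symmetric]]
    top_column_eq_if_f_k_eq[OF assms(2,1) assms(3)[symmetric]]
  by blast

section \<open>Inversions of signed permutations\<close>

lemma act_unitv:
  assumes "a0 \<in> {1..n}"
  shows "act n w (unitv a0) = (\<lambda>j. if nat \<bar>w a0\<bar> = j then sgn (w a0) else 0)"
proof
  fix j
  have "act n w (unitv a0) j = (\<Sum>a\<in>{1..n}. if a = a0 then (if nat \<bar>w a0\<bar> = j then sgn (w a0) else 0) else 0)"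
    unfolding act_def by (rule sum.cong) (auto simp: unitv_def)
  also have "\<dots> = (if nat \<bar>w a0\<bar> = j then sgn (w a0) else 0)" using assms by (simp add: sum.delta)
  finally show "act n w (unitv a0) j = (if nat \<bar>w a0\<bar> = j then sgn (w a0) else 0)" .
qed

lemma act_add: "act n w (\<lambda>j. f j + g j) = (\<lambda>j. act n w f j + act n w g j)"
proof
  fix j show "act n w (\<lambda>j. f j + g j) j = act n w f j + act n w g j"
    unfolding act_def by (simp add: sum.distrib[symmetric] distrib_left if_distrib cong: if_cong)
qed

lemma act_diff: "act n w (\<lambda>j. f j - g j) = (\<lambda>j. act n w f j - act n w g j)"
proof
  fix j show "act n w (\<lambda>j. f j - g j) j = act n w f j - act n w g j"
    unfolding act_def by (simp add: sum_subtractf[symmetric] right_diff_distrib) (rule sum.cong, auto simp: right_diff_distrib)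
qed

lemma act_RMinus:
  assumes "a \<in> {1..n}" "b \<in> {1..n}"
  shows "act n w (rvec (RMinus a b)) = (\<lambda>j. (if nat \<bar>w a\<bar> = j then sgn (w a) else 0) + (if nat \<bar>w b\<bar> = j then - sgn (w b) else 0))"
proof -
  have "rvec (RMinus a b) = (\<lambda>j. unitv a j - unitv b j)" by simp
  then show ?thesis using act_diff[of n w "unitv a" "unitv b"] act_unitv[OF assms(1)] act_unitv[OF assms(2)]
    by auto
qed

lemma act_RPlus:
  assumes "a \<in> {1..n}" "b \<in> {1..n}"
  shows "act n w (rvec (RPlus a b)) = (\<lambda>j. (if nat \<bar>w a\<bar> = j then sgn (w a) else 0) + (if nat \<bar>w b\<bar> = j then sgn (w b) else 0))"
proof -
  have "rvec (RPlus a b) = (\<lambda>j. unitv a j + unitv b j)" by simp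
  then show ?thesis using act_add[of n w "unitv a" "unitv b"] act_unitv[OF assms(1)] act_unitv[OF assms(2)]
    by auto
qed

lemma act_RShort:
  assumes "a \<in> {1..n}"
  shows "act n w (rvec (RShort a)) = (\<lambda>j. if nat \<bar>w a\<bar> = j then sgn (w a) else 0)"
  using act_unitv[OF assms] by simp

lemma signed_pair_eq_neg_posroot_iff_less:
  fixes s t :: int
  assumes "p < q" "p \<in> {1..n}" "q \<in> {1..n}" "s = 1 \<or> s = -1" "t = 1 \<or> t = -1"
  shows "(\<exists>\<beta>\<in>posroots n. (\<lambda>j. (if p = j then s else 0) + (if q = j then t else 0)) = (\<lambda>j. - rvec \<beta> j))
     \<longleftrightarrow> s = -1"
proof
  assume "\<exists>\<beta>\<in>posroots n. (\<lambda>j. (if p = j then s else 0) + (if q = j then t else 0)) = (\<lambda>j. - rvec \<beta> j)"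
  then obtain \<beta> where b: "\<beta> \<in> posroots n"
    and F: "\<And>j. (if p = j then s else 0) + (if q = j then t else 0) = - rvec \<beta> j"
    by (metis (no_types, lifting))
  from b consider (m) a c where "\<beta> = RMinus a c" "1 \<le> a" "a < c" "c \<le> n"
    | (pl) a c where "\<beta> = RPlus a c" "1 \<le> a" "a < c" "c \<le> n"
    | (s) a where "\<beta> = RShort a" "1 \<le> a" "a \<le> n"
    unfolding posroots_def by blast
  then show "s = -1"
  proof cases
    case m then show ?thesis using F[of a] F[of c] assms by (auto simp: unitv_def split: if_splits)
  next
    case pl then show ?thesis using F[of a] F[of c] assms by (auto simp: unitv_def split: if_splits)
  next
    case s then show ?thesis using F[of p] F[of q] assms by (auto simp: unitv_def split: if_splits)
  qed
next
  assume s: "s = -1"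
  show "\<exists>\<beta>\<in>posroots n. (\<lambda>j. (if p = j then s else 0) + (if q = j then t else 0)) = (\<lambda>j. - rvec \<beta> j)"
  proof (cases "t = 1")
    case True
    then show ?thesis using s assms
      by (intro bexI[of _ "RMinus p q"]) (auto simp: unitv_def posroots_def)
  next
    case False
    then show ?thesis using s assms
      by (intro bexI[of _ "RPlus p q"]) (auto simp: unitv_def posroots_def)
  qed
qed

lemma signed_pair_eq_neg_posroot_iff:
  fixes s t :: int
  assumes "p \<noteq> q" "p \<in> {1..n}" "q \<in> {1..n}" "s = 1 \<or> s = -1" "t = 1 \<or> t = -1"
  shows "(\<exists>\<beta>\<in>posroots n. (\<lambda>j. (if p = j then s else 0) + (if q = j then t else 0)) = (\<lambda>j. - rvec \<beta> j))
     \<longleftrightarrow> (if p < q then s = -1 else t = -1)"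
proof (cases "p < q")
  case True
  then show ?thesis using signed_pair_eq_neg_posroot_iff_less[OF True assms(2-5)] by simp
next
  case False
  then have "q < p" using assms(1) by simp
  then show ?thesis using signed_pair_eq_neg_posroot_iff_less[OF _ assms(3,2,5,4)] False
    by (simp add: add.commute)
qed

lemma signed_unit_eq_neg_posroot_iff:
  fixes s :: int
  assumes "p \<in> {1..n}" "s = 1 \<or> s = -1"
  shows "(\<exists>\<beta>\<in>posroots n. (\<lambda>j. if p = j then s else 0) = (\<lambda>j. - rvec \<beta> j)) \<longleftrightarrow> s = -1"
proof
  assume "\<exists>\<beta>\<in>posroots n. (\<lambda>j. if p = j then s else 0) = (\<lambda>j. - rvec \<beta> j)"
  then obtain \<beta> where b: "\<beta> \<in> posroots n" and F: "\<And>j. (if p = j then s else 0) = - rvec \<beta> j"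
    by (metis (no_types, lifting))
  from b consider (m) a c where "\<beta> = RMinus a c" "a < c" | (pl) a c where "\<beta> = RPlus a c" "a < c"
    | (s) a where "\<beta> = RShort a"
    unfolding posroots_def by blast
  then show "s = -1"
  proof cases
    case (m a c) then show ?thesis using F[of a] by (auto simp: unitv_def split: if_splits)
  next
    case (pl a c) then show ?thesis using F[of a] by (auto simp: unitv_def split: if_splits)
  next
    case (s a) then show ?thesis using F[of a] by (auto simp: unitv_def split: if_splits)
  qed
next
  assume "s = -1"
  then show "\<exists>\<beta>\<in>posroots n. (\<lambda>j. if p = j then s else 0) = (\<lambda>j. - rvec \<beta> j)"
    using assms by (intro bexI[of _ "RShort p"]) (auto simp: unitv_def posroots_def)
qed

lemma card_bij_betw_greater:
  assumes "bij_betw f {1..n} {1..n}"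
  shows "card {p \<in> {1..n}. z < f p} = n - z"
proof -
  have "f ` {p \<in> {1..n}. z < f p} = {x \<in> f ` {1..n}. z < x}" by auto
  also have "\<dots> = {z<..n}" using bij_betw_imp_surj_on[OF assms] by auto
  finally have "f ` {p \<in> {1..n}. z < f p} = {z<..n}" .
  moreover have "inj_on f {p \<in> {1..n}. z < f p}"
    using bij_betw_imp_inj_on[OF assms] by (rule inj_on_subset) auto
  ultimately show ?thesis by (metis card_image card_greaterThanAtMost)
qed

locale signed_perm =
  fixes n :: nat and w :: "nat \<Rightarrow> int"
  assumes bij: "bij_betw (\<lambda>a. nat \<bar>w a\<bar>) {1..n} {1..n}"
begin

lemma abs_range: "a \<in> {1..n} \<Longrightarrow> nat \<bar>w a\<bar> \<in> {1..n}"
  using bij unfolding bij_betw_def by auto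

lemma abs_inj: "a \<in> {1..n} \<Longrightarrow> b \<in> {1..n} \<Longrightarrow> a \<noteq> b \<Longrightarrow> \<bar>w a\<bar> \<noteq> \<bar>w b\<bar>"
proof -
  assume ab: "a \<in> {1..n}" "b \<in> {1..n}" "a \<noteq> b"
  have "nat \<bar>w a\<bar> \<noteq> nat \<bar>w b\<bar>" using bij ab unfolding bij_betw_def inj_on_def by blast
  then show ?thesis by auto
qed

lemma nonzero: "a \<in> {1..n} \<Longrightarrow> w a \<noteq> 0"
  using abs_range[of a] by auto

lemma sgn_cases: "a \<in> {1..n} \<Longrightarrow> sgn (w a) = 1 \<or> sgn (w a) = -1"
  using nonzero[of a] by (auto simp: sgn_if)

lemma RMinus_in_Inv_iff:
  assumes "1 \<le> a" "a < b" "b \<le> n"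
  shows "RMinus a b \<in> Inv n w \<longleftrightarrow> (if \<bar>w a\<bar> < \<bar>w b\<bar> then w a < 0 else w b > 0)"
proof -
  have ab: "a \<in> {1..n}" "b \<in> {1..n}" using assms by auto
  have pq: "nat \<bar>w a\<bar> \<noteq> nat \<bar>w b\<bar>" using abs_inj[OF ab] assms by auto
  have "RMinus a b \<in> posroots n" using assms by (auto simp: posroots_def)
  then have "RMinus a b \<in> Inv n w \<longleftrightarrow>
    (\<exists>\<beta>\<in>posroots n. (\<lambda>j. (if nat \<bar>w a\<bar> = j then sgn (w a) else 0) + (if nat \<bar>w b\<bar> = j then - sgn (w b) else 0)) = (\<lambda>j. - rvec \<beta> j))"
    unfolding Inv_def mem_Collect_eq act_RMinus[OF ab] by simp
  also have "\<dots> \<longleftrightarrow> (if nat \<bar>w a\<bar> < nat \<bar>w b\<bar> then sgn (w a) = -1 else - sgn (w b) = -1)"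
    by (rule signed_pair_eq_neg_posroot_iff) (use pq abs_range[OF ab(1)] abs_range[OF ab(2)] sgn_cases[OF ab(1)] sgn_cases[OF ab(2)] in auto)
  also have "\<dots> \<longleftrightarrow> (if \<bar>w a\<bar> < \<bar>w b\<bar> then w a < 0 else w b > 0)"
    by (auto simp: sgn_if)
  finally show ?thesis .
qed

lemma RPlus_in_Inv_iff:
  assumes "1 \<le> a" "a < b" "b \<le> n"
  shows "RPlus a b \<in> Inv n w \<longleftrightarrow> (if \<bar>w a\<bar> < \<bar>w b\<bar> then w a < 0 else w b < 0)"
proof -
  have ab: "a \<in> {1..n}" "b \<in> {1..n}" using assms by auto
  have pq: "nat \<bar>w a\<bar> \<noteq> nat \<bar>w b\<bar>" using abs_inj[OF ab] assms by auto
  have "RPlus a b \<in> posroots n" using assms by (auto simp: posroots_def)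
  then have "RPlus a b \<in> Inv n w \<longleftrightarrow>
    (\<exists>\<beta>\<in>posroots n. (\<lambda>j. (if nat \<bar>w a\<bar> = j then sgn (w a) else 0) + (if nat \<bar>w b\<bar> = j then sgn (w b) else 0)) = (\<lambda>j. - rvec \<beta> j))"
    unfolding Inv_def mem_Collect_eq act_RPlus[OF ab] by simp
  also have "\<dots> \<longleftrightarrow> (if nat \<bar>w a\<bar> < nat \<bar>w b\<bar> then sgn (w a) = -1 else sgn (w b) = -1)"
    by (rule signed_pair_eq_neg_posroot_iff) (use pq abs_range[OF ab(1)] abs_range[OF ab(2)] sgn_cases[OF ab(1)] sgn_cases[OF ab(2)] in auto)
  also have "\<dots> \<longleftrightarrow> (if \<bar>w a\<bar> < \<bar>w b\<bar> then w a < 0 else w b < 0)"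
    by (auto simp: sgn_if)
  finally show ?thesis .
qed

lemma RShort_in_Inv_iff:
  assumes "1 \<le> a" "a \<le> n"
  shows "RShort a \<in> Inv n w \<longleftrightarrow> w a < 0"
proof -
  have ab: "a \<in> {1..n}" using assms by auto
  have "RShort a \<in> posroots n" using assms by (auto simp: posroots_def)
  then have "RShort a \<in> Inv n w \<longleftrightarrow>
    (\<exists>\<beta>\<in>posroots n. (\<lambda>j. if nat \<bar>w a\<bar> = j then sgn (w a) else 0) = (\<lambda>j. - rvec \<beta> j))"
    unfolding Inv_def mem_Collect_eq act_RShort[OF ab] by simp
  also have "\<dots> \<longleftrightarrow> sgn (w a) = -1"
    by (rule signed_unit_eq_neg_posroot_iff) (use abs_range[OF ab] sgn_cases[OF ab] in auto)
  also have "\<dots> \<longleftrightarrow> w a < 0" by (auto simp: sgn_if)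
  finally show ?thesis .
qed

lemma card_abs_greater:
  assumes "c \<in> {1..n}"
  shows "card {p \<in> {1..n}. \<bar>w p\<bar> > \<bar>w c\<bar>} = n - nat \<bar>w c\<bar>"
proof -
  have "{p \<in> {1..n}. \<bar>w p\<bar> > \<bar>w c\<bar>} = {p \<in> {1..n}. nat \<bar>w c\<bar> < nat \<bar>w p\<bar>}" by auto
  then show ?thesis using card_bij_betw_greater[OF bij, of "nat \<bar>w c\<bar>"] by (simp only:)
qed

end

section \<open>The inversion sets of \<open>W_OG\<close>\<close>

locale og_perm = signed_perm n w for k n :: nat and w :: "nat \<Rightarrow> int" +
  fixes r :: nat
  assumes k_less_n: "k < n"
    and zero: "\<And>a. a \<notin> {1..n} \<Longrightarrow> w a = 0"
    and r_le_k: "r \<le> k"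
    and pos_head: "\<And>a. a \<in> {1..k-r} \<Longrightarrow> w a > 0"
    and neg_middle: "\<And>a. a \<in> {k-r+1..k} \<Longrightarrow> w a < 0"
    and pos_tail: "\<And>a. a \<in> {k+1..n} \<Longrightarrow> w a > 0"
    and head_inc: "\<And>a b. 1 \<le> a \<Longrightarrow> a < b \<Longrightarrow> b \<le> k - r \<Longrightarrow> w a < w b"
    and middle_dec: "\<And>a b. k - r + 1 \<le> a \<Longrightarrow> a < b \<Longrightarrow> b \<le> k \<Longrightarrow> \<bar>w a\<bar> > \<bar>w b\<bar>"
    and tail_inc: "\<And>a b. k + 1 \<le> a \<Longrightarrow> a < b \<Longrightarrow> b \<le> n \<Longrightarrow> w a < w b"

lemma og_perm_iff_mem_W_OG:
  assumes "k < n"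
  shows "(\<exists>r. og_perm k n w r) \<longleftrightarrow> w \<in> W_OG k n"
  using assms unfolding W_OG_def og_perm_def og_perm_axioms_def signed_perm_def by blast

context og_perm
begin

lemma sign_iff:
  assumes "a \<in> {1..n}"
  shows "(w a < 0 \<longleftrightarrow> k - r < a \<and> a \<le> k) \<and> (w a > 0 \<longleftrightarrow> \<not> (k - r < a \<and> a \<le> k))"
proof -
  consider "a \<le> k - r" | "k - r < a \<and> a \<le> k" | "k < a" by linarith
  then show ?thesis
  proof cases
    case 1 then have "w a > 0" using pos_head assms by auto
    then show ?thesis using 1 by auto
  next
    case 2 then have "w a < 0" using neg_middle assms by auto
    then show ?thesis using 2 by auto
  next
    case 3 then have "w a > 0" using pos_tail assms by auto
    then show ?thesis using 3 by auto
  qed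
qed

lemma tail_mono: "k + 1 \<le> a \<Longrightarrow> a \<le> b \<Longrightarrow> b \<le> n \<Longrightarrow> w a \<le> w b"
  using tail_inc by (cases "a = b") (auto, meson le_neq_implies_less less_imp_le)

lemma le_card_tail_less_iff:
  assumes "1 \<le> p" "p \<le> n - k"
  shows "p \<le> card {b \<in> {k+1..n}. w b < t} \<longleftrightarrow> w (k+p) < t"
proof
  assume H: "p \<le> card {b \<in> {k+1..n}. w b < t}"
  show "w (k+p) < t"
  proof (rule ccontr)
    assume "\<not> w (k+p) < t"
    then have le: "t \<le> w (k+p)" by simp
    have "{b \<in> {k+1..n}. w b < t} \<subseteq> {k+1..<k+p}"
    proof
      fix x assume x: "x \<in> {b \<in> {k+1..n}. w b < t}"
      have "\<not> k+p \<le> x"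
      proof
        assume "k+p \<le> x"
        then have "w (k+p) \<le> w x" using tail_mono[of "k+p" x] x assms by auto
        then show False using x le by auto
      qed
      then show "x \<in> {k+1..<k+p}" using x by auto
    qed
    then have "card {b \<in> {k+1..n}. w b < t} \<le> card {k+1..<k+p}" by (rule card_mono[rotated]) simp
    then show False using H assms by simp
  qed
next
  assume H: "w (k+p) < t"
  have "{k+1..k+p} \<subseteq> {b \<in> {k+1..n}. w b < t}"
  proof
    fix x assume x: "x \<in> {k+1..k+p}"
    then have "w x \<le> w (k+p)" using tail_mono[of x "k+p"] assms by auto
    then show "x \<in> {b \<in> {k+1..n}. w b < t}" using H x assms by auto
  qed
  then have "card {k+1..k+p} \<le> card {b \<in> {k+1..n}. w b < t}" by (rule card_mono[rotated]) simp
  then show "p \<le> card {b \<in> {k+1..n}. w b < t}" by simp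
qed

lemma le_card_tail_greater_iff:
  assumes "1 \<le> q" "q \<le> n - k"
  shows "q \<le> card {b \<in> {k+1..n}. w b > t} \<longleftrightarrow> w (n+1-q) > t"
proof
  assume H: "q \<le> card {b \<in> {k+1..n}. w b > t}"
  show "w (n+1-q) > t"
  proof (rule ccontr)
    assume "\<not> w (n+1-q) > t"
    then have le: "w (n+1-q) \<le> t" by simp
    have "{b \<in> {k+1..n}. w b > t} \<subseteq> {n+2-q..n}"
    proof
      fix x assume x: "x \<in> {b \<in> {k+1..n}. w b > t}"
      have "\<not> x \<le> n+1-q"
      proof
        assume "x \<le> n+1-q"
        then have "w x \<le> w (n+1-q)" using tail_mono[of x "n+1-q"] x assms by auto
        then show False using x le by auto
      qed
      then show "x \<in> {n+2-q..n}" using x by auto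
    qed
    then have "card {b \<in> {k+1..n}. w b > t} \<le> card {n+2-q..n}" by (rule card_mono[rotated]) simp
    then show False using H assms by simp
  qed
next
  assume H: "w (n+1-q) > t"
  have "{n+1-q..n} \<subseteq> {b \<in> {k+1..n}. w b > t}"
  proof
    fix x assume x: "x \<in> {n+1-q..n}"
    then have "w (n+1-q) \<le> w x" using tail_mono[of "n+1-q" x] assms by auto
    then show "x \<in> {b \<in> {k+1..n}. w b > t}" using H x assms by auto
  qed
  then have "card {n+1-q..n} \<le> card {b \<in> {k+1..n}. w b > t}" by (rule card_mono[rotated]) simp
  then show "q \<le> card {b \<in> {k+1..n}. w b > t}" using assms by simp
qed

lemma card_tail_le: "card {b \<in> {k+1..n}. P b} \<le> n - k"
proof -
  have "card {b \<in> {k+1..n}. P b} \<le> card {k+1..n}" by (rule card_mono) auto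
  then show ?thesis by simp
qed

definition row_len :: "nat \<Rightarrow> nat" where
  "row_len a = (if w a > 0 then card {b \<in> {k+1..n}. w b < w a} else n-k+1 + card {b \<in> {k+1..n}. w b > - w a})"

lemma row_len_le: "row_len a \<le> 2*(n-k)+1"
  using card_tail_le[of "\<lambda>b. w b < w a"] card_tail_le[of "\<lambda>b. w b > - w a"] by (simp add: row_len_def)

lemma base_root_in_Inv_iff_minus:
  assumes "1 \<le> a" "a \<le> k" "1 \<le> p" "p \<le> n-k"
  shows "base_root k n a p \<in> Inv n w \<longleftrightarrow> p \<le> row_len a"
proof -
  have aa: "a \<in> {1..n}" using assms k_less_n by auto
  have b: "k+p \<in> {1..n}" "w (k+p) > 0" using assms pos_tail k_less_n by auto
  have ne: "\<bar>w a\<bar> \<noteq> \<bar>w (k+p)\<bar>" using abs_inj[OF aa b(1)] assms by simp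
  have "base_root k n a p \<in> Inv n w \<longleftrightarrow> (if \<bar>w a\<bar> < \<bar>w (k+p)\<bar> then w a < 0 else w (k+p) > 0)"
    using RMinus_in_Inv_iff[of a "k+p"] assms k_less_n by (simp add: base_root_def)
  also have "\<dots> \<longleftrightarrow> w a < 0 \<or> w (k+p) < w a" using b ne by auto
  also have "\<dots> \<longleftrightarrow> p \<le> row_len a"
    using le_card_tail_less_iff[of p "w a"] nonzero[OF aa] assms by (auto simp: row_len_def)
  finally show ?thesis .
qed

lemma base_root_in_Inv_iff_short:
  assumes "1 \<le> a" "a \<le> k"
  shows "base_root k n a (n-k+1) \<in> Inv n w \<longleftrightarrow> n-k+1 \<le> row_len a"
proof -
  have "base_root k n a (n-k+1) \<in> Inv n w \<longleftrightarrow> w a < 0"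
    using RShort_in_Inv_iff[of a] assms k_less_n by (simp add: base_root_def)
  then show ?thesis
    using card_tail_le[of "\<lambda>b. w b < w a"] nonzero[of a] assms k_less_n by (auto simp: row_len_def)
qed

lemma base_root_in_Inv_iff_plus:
  assumes "1 \<le> a" "a \<le> k" "n-k+1 < p" "p \<le> 2*(n-k)+1"
  shows "base_root k n a p \<in> Inv n w \<longleftrightarrow> p \<le> row_len a"
proof -
  define b where "b = 2*n-k+2-p"
  have aa: "a \<in> {1..n}" using assms k_less_n by auto
  have bb: "k+1 \<le> b" "b \<le> n" "a < b" using assms k_less_n unfolding b_def by linarith+
  have b: "b \<in> {1..n}" "w b > 0" using bb pos_tail by auto
  have ne: "\<bar>w a\<bar> \<noteq> \<bar>w b\<bar>" using abs_inj[OF aa b(1)] bb by simp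
  have "base_root k n a p = RPlus a b" using assms unfolding base_root_def b_def by simp
  then have "base_root k n a p \<in> Inv n w \<longleftrightarrow> (if \<bar>w a\<bar> < \<bar>w b\<bar> then w a < 0 else w b < 0)"
    using RPlus_in_Inv_iff[of a b] bb assms by simp
  also have "\<dots> \<longleftrightarrow> w a < 0 \<and> - w a < w b" using b ne by auto
  also have "\<dots> \<longleftrightarrow> p \<le> row_len a"
  proof (cases "w a > 0")
    case True
    then show ?thesis using assms card_tail_le[of "\<lambda>b. w b < w a"] by (simp add: row_len_def)
  next
    case False
    then have neg: "w a < 0" using nonzero[OF aa] by simp
    define q where "q = p - (n-k+1)"
    have q: "1 \<le> q" "q \<le> n-k" "n+1-q = b" using assms k_less_n unfolding q_def b_def by linarith+
    have "- w a < w b \<longleftrightarrow> q \<le> card {b \<in> {k+1..n}. w b > - w a}"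
      using le_card_tail_greater_iff[OF q(1,2), of "- w a"] q(3) by simp
    also have "\<dots> \<longleftrightarrow> p \<le> row_len a" using neg q_def assms by (auto simp: row_len_def)
    finally show ?thesis using neg by simp
  qed
  finally show ?thesis .
qed

lemma base_root_in_Inv_iff:
  assumes "1 \<le> a" "a \<le> k" "1 \<le> p" "p \<le> 2*(n-k)+1"
  shows "base_root k n a p \<in> Inv n w \<longleftrightarrow> p \<le> row_len a"
proof -
  consider "p \<le> n-k" | "p = n-k+1" | "n-k+1 < p" by linarith
  then show ?thesis
    using base_root_in_Inv_iff_minus base_root_in_Inv_iff_short base_root_in_Inv_iff_plus assms
    by cases auto
qed

lemma row_len_pos_le: "w a > 0 \<Longrightarrow> row_len a \<le> n - k"
  using card_tail_le[of "\<lambda>b. w b < w a"] by (simp add: row_len_def)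

lemma row_len_neg_ge: "w a < 0 \<Longrightarrow> row_len a \<ge> n - k + 1"
  by (simp add: row_len_def)

lemma head_mono: "1 \<le> a \<Longrightarrow> a \<le> a' \<Longrightarrow> a' \<le> k - r \<Longrightarrow> w a \<le> w a'"
  using head_inc[of a a'] by (cases "a = a'") auto

lemma middle_antimono: "k - r < a \<Longrightarrow> a \<le> a' \<Longrightarrow> a' \<le> k \<Longrightarrow> \<bar>w a'\<bar> \<le> \<bar>w a\<bar>"
  using middle_dec[of a a'] by (cases "a = a'") auto

lemma row_len_mono:
  assumes "1 \<le> a" "a \<le> a'" "a' \<le> k"
  shows "row_len a \<le> row_len a'"
proof -
  have aa: "a \<in> {1..n}" "a' \<in> {1..n}" using assms k_less_n by auto
  consider "w a > 0" "w a' > 0" | "w a > 0" "w a' < 0" | "w a < 0" "w a' < 0" | "w a < 0" "w a' > 0"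
    using nonzero[OF aa(1)] nonzero[OF aa(2)] by linarith
  then show ?thesis
  proof cases
    case 1
    then have "a' \<le> k - r" using sign_iff[OF aa(2)] assms by auto
    then have "{b \<in> {k+1..n}. w b < w a} \<subseteq> {b \<in> {k+1..n}. w b < w a'}"
      using head_mono[of a a'] assms by fastforce
    then show ?thesis using 1 card_mono[of "{b \<in> {k+1..n}. w b < w a'}"] by (simp add: row_len_def)
  next
    case 2
    then show ?thesis using row_len_pos_le[of a] row_len_neg_ge[of a'] by linarith
  next
    case 3
    then have "k - r < a" using sign_iff[OF aa(1)] by auto
    then have "{b \<in> {k+1..n}. w b > - w a} \<subseteq> {b \<in> {k+1..n}. w b > - w a'}"
      using middle_antimono[of a a'] assms 3 by fastforce
    then show ?thesis using 3 card_mono[of "{b \<in> {k+1..n}. w b > - w a'}"] by (simp add: row_len_def)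
  next
    case 4
    then show ?thesis using sign_iff[OF aa(1)] sign_iff[OF aa(2)] assms by auto
  qed
qed

lemma RPlus_top_in_Inv_iff:
  assumes "1 \<le> a" "a < c" "c \<le> k"
  shows "RPlus a c \<in> Inv n w \<longleftrightarrow> (w c < 0 \<and> \<bar>w a\<bar> > \<bar>w c\<bar>)"
proof -
  have ac: "a \<in> {1..n}" "c \<in> {1..n}" using assms k_less_n by auto
  have ne: "\<bar>w a\<bar> \<noteq> \<bar>w c\<bar>" using abs_inj[OF ac] assms by simp
  have e: "RPlus a c \<in> Inv n w \<longleftrightarrow> (if \<bar>w a\<bar> < \<bar>w c\<bar> then w a < 0 else w c < 0)"
    using RPlus_in_Inv_iff[of a c] assms k_less_n by simp
  show ?thesis
  proof (cases "w a < 0")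
    case True
    then have ar: "k - r < a" using sign_iff[OF ac(1)] by auto
    then have "w c < 0" using sign_iff[OF ac(2)] assms by auto
    moreover have "\<bar>w a\<bar> > \<bar>w c\<bar>" using middle_dec[of a c] ar assms by simp
    ultimately show ?thesis using e by simp
  next
    case False
    then show ?thesis using e ne by auto
  qed
qed

lemma RMinus_in_Inv_imp:
  assumes "RMinus a b \<in> Inv n w" "1 \<le> a" "a < b" "b \<le> n"
  shows "a \<le> k \<and> k < b"
proof -
  have ab: "a \<in> {1..n}" "b \<in> {1..n}" using assms by auto
  have inv: "if \<bar>w a\<bar> < \<bar>w b\<bar> then w a < 0 else w b > 0"
    using RMinus_in_Inv_iff[of a b] assms by simp
  have "\<not> b \<le> k"
  proof
    assume b: "b \<le> k"
    consider "b \<le> k - r" | "a \<le> k - r" "k - r < b" | "k - r < a" by linarith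
    then show False
    proof cases
      case 1
      then show False using head_inc[of a b] pos_head[of a] inv assms by auto
    next
      case 2
      then show False using sign_iff[OF ab(2)] pos_head[of a] inv assms b by (auto split: if_splits)
    next
      case 3
      then show False using middle_dec[of a b] sign_iff[OF ab(2)] inv assms b by auto
    qed
  qed
  moreover have "\<not> k < a" using tail_inc[of a b] pos_tail[of a] pos_tail[of b] inv assms by auto
  ultimately show ?thesis by simp
qed

lemma RPlus_in_Inv_imp:
  assumes "RPlus a b \<in> Inv n w" "1 \<le> a" "a < b" "b \<le> n"
  shows "a \<le> k"
proof (rule ccontr)
  assume "\<not> a \<le> k"
  then have "w a > 0" "w b > 0" using pos_tail assms by auto
  then show False using RPlus_in_Inv_iff[of a b] assms by (auto split: if_splits)
qed

lemma RShort_in_Inv_imp: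
  assumes "RShort a \<in> Inv n w" "1 \<le> a" "a \<le> n"
  shows "a \<le> k"
  using RShort_in_Inv_iff[of a] pos_tail[of a] assms by fastforce

lemma Inv_subset_regions: "Inv n w \<subseteq> base_region k n \<union> top_region k"
proof
  fix \<alpha> assume \<alpha>: "\<alpha> \<in> Inv n w"
  then have "\<alpha> \<in> posroots n" by (simp add: Inv_def)
  then consider (m) a b where "\<alpha> = RMinus a b" "1 \<le> a" "a < b" "b \<le> n"
    | (pl) a b where "\<alpha> = RPlus a b" "1 \<le> a" "a < b" "b \<le> n"
    | (s) a where "\<alpha> = RShort a" "1 \<le> a" "a \<le> n"
    unfolding posroots_def by blast
  then show "\<alpha> \<in> base_region k n \<union> top_region k"
  proof cases
    case m
    then show ?thesis using RMinus_in_Inv_imp \<alpha> by (auto simp: base_region_def)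
  next
    case pl
    then have "a \<le> k" using RPlus_in_Inv_imp \<alpha> by simp
    then show ?thesis using pl by (cases "b \<le> k") (auto simp: base_region_def top_region_def)
  next
    case s
    then show ?thesis using RShort_in_Inv_imp \<alpha> by (auto simp: base_region_def)
  qed
qed

lemma row_count_Inv:
  assumes "1 \<le> a" "a \<le> k"
  shows "row_count k n (Inv n w) a = row_len a"
proof -
  have "{p \<in> {1..2*(n-k)+1}. base_root k n a p \<in> Inv n w} = {1..row_len a}"
    using base_root_in_Inv_iff[OF assms] row_len_le[of a] by auto
  then show ?thesis unfolding row_count_def by simp
qed

lemma lower_ideal_base_Inv: "lower_ideal n (base_region k n) (Inv n w \<inter> base_region k n)"
proof (rule lower_ideal_base_regionI[where lam = row_len])
  show "Inv n w \<inter> base_region k n \<subseteq> base_region k n" by simp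
  show "k < n" by (rule k_less_n)
  show "\<And>a p. 1 \<le> a \<Longrightarrow> a \<le> k \<Longrightarrow> 1 \<le> p \<Longrightarrow> p \<le> 2*(n-k)+1 \<Longrightarrow>
          base_root k n a p \<in> Inv n w \<inter> base_region k n \<longleftrightarrow> p \<le> row_len a"
    using base_root_in_Inv_iff base_root_in_base_region k_less_n by auto
  show "\<And>a a'. 1 \<le> a \<Longrightarrow> a \<le> a' \<Longrightarrow> a' \<le> k \<Longrightarrow> row_len a \<le> row_len a'"
    by (rule row_len_mono)
qed

lemma lower_ideal_top_Inv: "lower_ideal n (top_region k) (Inv n w \<inter> top_region k)"
  unfolding lower_ideal_def
proof (intro conjI ballI impI)
  show "Inv n w \<inter> top_region k \<subseteq> top_region k" by simp
next
  fix \<alpha> \<beta> assume a: "\<alpha> \<in> Inv n w \<inter> top_region k" and b: "\<beta> \<in> top_region k" and le: "root_le n \<beta> \<alpha>"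
  obtain a c where ac: "1 \<le> a" "a < c" "c \<le> k" "\<alpha> = RPlus a c" using a by (auto simp: top_region_def)
  obtain a' c' where ac': "1 \<le> a'" "a' < c'" "c' \<le> k" "\<beta> = RPlus a' c'" using b by (auto simp: top_region_def)
  have o: "a \<le> a'" "c \<le> c'" using root_le_RPlus_iff[of a c n a' c'] ac ac' le k_less_n by auto
  have i: "w c < 0" "\<bar>w a\<bar> > \<bar>w c\<bar>" using RPlus_top_in_Inv_iff[OF ac(1-3)] a ac by auto
  have cr: "k - r < c" using sign_iff[of c] i ac k_less_n by auto
  have wc': "w c' < 0" using sign_iff[of c'] cr o ac' k_less_n by auto
  have c'c: "\<bar>w c'\<bar> \<le> \<bar>w c\<bar>" using middle_antimono[of c c'] cr o ac' by simp
  have "\<bar>w a'\<bar> > \<bar>w c'\<bar>"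
  proof (cases "a' \<le> k - r")
    case True
    then have "w a \<le> w a'" "w a > 0" using head_mono[of a a'] pos_head[of a] o ac by auto
    then show ?thesis using i c'c by simp
  next
    case False
    then show ?thesis using middle_dec[of a' c'] ac' by simp
  qed
  then show "\<beta> \<in> Inv n w \<inter> top_region k" using RPlus_top_in_Inv_iff[OF ac'(1-3)] wc' ac' b by simp
qed

text \<open>For \<open>w a > 0 > w c\<close> the two rows count the tail entries below \<open>w a\<close> and above \<open>-w c\<close>;
  these cover the tail when \<open>w a > -w c\<close> and are disjoint otherwise.\<close>
lemma row_len_add_ge:
  assumes "w a > 0" "w c < 0" "w a > - w c"
  shows "2*(n-k)+1 \<le> row_len a + row_len c"
proof -
  have "{b \<in> {k+1..n}. w b < w a} \<union> {b \<in> {k+1..n}. w b > - w c} = {k+1..n}" using assms by auto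
  then have "n - k \<le> card {b \<in> {k+1..n}. w b < w a} + card {b \<in> {k+1..n}. w b > - w c}"
    using card_Un_le[of "{b \<in> {k+1..n}. w b < w a}" "{b \<in> {k+1..n}. w b > - w c}"] by simp
  then show ?thesis using assms by (simp add: row_len_def)
qed

lemma row_len_add_le:
  assumes "w a > 0" "w c < 0" "w a < - w c"
  shows "row_len a + row_len c \<le> 2*(n-k)+1"
proof -
  let ?A = "{b \<in> {k+1..n}. w b < w a}" and ?B = "{b \<in> {k+1..n}. w b > - w c}"
  have "?A \<inter> ?B = {}" "?A \<union> ?B \<subseteq> {k+1..n}" using assms by auto
  then have "card ?A + card ?B \<le> n - k"
    using card_Un_disjoint[of ?A ?B] card_mono[of "{k+1..n}" "?A \<union> ?B"] by simp
  then show ?thesis using assms by (simp add: row_len_def)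
qed

lemma Inv_top_rule:
  assumes "1 \<le> a" "a < c" "c \<le> k"
  shows "(row_len a + row_len c > 2*(n-k)+1 \<longrightarrow> RPlus a c \<in> Inv n w)
       \<and> (row_len a + row_len c < 2*(n-k)+1 \<longrightarrow> RPlus a c \<notin> Inv n w)"
proof -
  have ac: "a \<in> {1..n}" "c \<in> {1..n}" using assms k_less_n by auto
  have ne: "\<bar>w a\<bar> \<noteq> \<bar>w c\<bar>" using abs_inj[OF ac] assms by simp
  consider "w c > 0" | "w c < 0" "w a < 0" | "w c < 0" "w a > 0" using nonzero[OF ac(1)] nonzero[OF ac(2)] by linarith
  then show ?thesis
  proof cases
    case 1
    then have "w a > 0" using sign_iff[OF ac(2)] pos_head[of a] assms by auto
    then have "row_len a + row_len c \<le> 2*(n-k)" using row_len_pos_le[of a] row_len_pos_le[of c] 1 by linarith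
    then show ?thesis using RPlus_top_in_Inv_iff[OF assms] 1 by auto
  next
    case 2
    then have "\<bar>w a\<bar> > \<bar>w c\<bar>" using sign_iff[OF ac(1)] middle_dec[of a c] assms by simp
    moreover have "row_len a + row_len c \<ge> 2*(n-k)+2" using row_len_neg_ge[of a] row_len_neg_ge[of c] 2 by linarith
    ultimately show ?thesis using RPlus_top_in_Inv_iff[OF assms] 2 by auto
  next
    case 3
    then show ?thesis using RPlus_top_in_Inv_iff[OF assms] row_len_add_ge[of a c] row_len_add_le[of a c] ne
      by (cases "w a > - w c") auto
  qed
qed

lemma card_Inv_two_base_rows:
  assumes "RPlus a b \<in> top_region k"
  shows "card (Inv n w \<inter> (base_row k n (k+1-a) \<union> base_row k n (k+1-b))) = row_len a + row_len b"
proof -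
  have ab: "1 \<le> a" "a < b" "b \<le> k" using assms by (auto simp: top_region_def)
  then show ?thesis using card_Int_two_base_rows[OF ab k_less_n] row_count_Inv by simp
qed

lemma Inv_in_Theta: "Inv n w \<in> Theta k n"
  unfolding Theta_def
proof (intro CollectI conjI allI impI)
  show "Inv n w \<subseteq> base_region k n \<union> top_region k" by (rule Inv_subset_regions)
  show "lower_ideal n (base_region k n) (Inv n w \<inter> base_region k n)" by (rule lower_ideal_base_Inv)
  show "lower_ideal n (top_region k) (Inv n w \<inter> top_region k)" by (rule lower_ideal_top_Inv)
next
  fix a b assume t: "RPlus a b \<in> top_region k"
    and "2*n+1-2*k < card (Inv n w \<inter> (base_row k n (k+1-a) \<union> base_row k n (k+1-b)))"
  then show "RPlus a b \<in> Inv n w"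
    using Inv_top_rule[of a b] card_Inv_two_base_rows[OF t] k_less_n by (auto simp: top_region_def)
next
  fix a b assume t: "RPlus a b \<in> top_region k"
    and "card (Inv n w \<inter> (base_row k n (k+1-a) \<union> base_row k n (k+1-b))) < 2*n+1-2*k"
  then show "RPlus a b \<notin> Inv n w"
    using Inv_top_rule[of a b] card_Inv_two_base_rows[OF t] k_less_n by (auto simp: top_region_def)
qed

text \<open>Closed form of \<open>f_k_entry k n (Inv n w)\<close>, established in \<open>f_k_entry_Inv\<close>.\<close>
definition Inv_entry :: "nat \<Rightarrow> nat" where
  "Inv_entry c = (if w c > 0 then card {b \<in> {k+1..n}. w b < w c} else 2*n-k+1 - nat \<bar>w c\<bar>)"

lemma top_column_Inv:
  assumes "c \<le> k"
  shows "top_column (Inv n w) c = {a. 1 \<le> a \<and> a < c \<and> w c < 0 \<and> \<bar>w a\<bar> > \<bar>w c\<bar>}"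
  using RPlus_top_in_Inv_iff[of _ c] assms by (auto simp: top_column_def)

text \<open>For \<open>w c < 0\<close>, the entries of larger absolute value lie either before \<open>c\<close> (forming the
  top column) or in the tail, since the middle block decreases in absolute value.\<close>
lemma abs_greater_eq_top_column_Un_tail:
  assumes "1 \<le> c" "c \<le> k" "w c < 0"
  shows "{p \<in> {1..n}. \<bar>w p\<bar> > \<bar>w c\<bar>} = top_column (Inv n w) c \<union> {b \<in> {k+1..n}. w b > - w c}"
    (is "?L = ?U \<union> ?T")
proof (intro equalityI subsetI)
  fix p assume p: "p \<in> ?L"
  have cr: "k - r < c" using sign_iff[of c] assms k_less_n by auto
  consider "p < c" | "c \<le> p" "p \<le> k" | "k < p" by linarith
  then show "p \<in> ?U \<union> ?T"
  proof cases
    case 1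
    then show ?thesis using p assms by (simp add: top_column_Inv)
  next
    case 2
    then show ?thesis using middle_antimono[of c p] cr p by simp
  next
    case 3
    then have "w p > 0" using pos_tail p by simp
    then show ?thesis using p 3 assms by simp
  qed
next
  fix p assume "p \<in> ?U \<union> ?T"
  then show "p \<in> ?L" using assms k_less_n by (auto simp: top_column_Inv)
qed

lemma f_k_entry_Inv:
  assumes "1 \<le> c" "c \<le> k"
  shows "f_k_entry k n (Inv n w) c = Inv_entry c"
proof (cases "w c > 0")
  case True
  then show ?thesis using row_count_Inv[OF assms] top_column_Inv[OF assms(2)]
    by (simp add: Inv_entry_def row_len_def)
next
  case False
  have cc: "c \<in> {1..n}" using assms k_less_n by auto
  then have nc: "w c < 0" using False nonzero[OF cc] by simp
  define B where "B = {b \<in> {k+1..n}. w b > - w c}"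
  have "top_column (Inv n w) c \<inter> B = {}"
    using top_column_subset[of "Inv n w" c] assms by (auto simp: B_def)
  then have "card (top_column (Inv n w) c \<union> B) = card (top_column (Inv n w) c) + card B"
    using card_Un_disjoint[OF finite_top_column] by (simp add: B_def)
  also have "top_column (Inv n w) c \<union> B = {p \<in> {1..n}. \<bar>w p\<bar> > \<bar>w c\<bar>}"
    unfolding B_def by (rule abs_greater_eq_top_column_Un_tail[OF assms nc, symmetric])
  finally have "card (top_column (Inv n w) c) + card B = n - nat \<bar>w c\<bar>"
    using card_abs_greater[OF cc] by simp
  moreover have "row_count k n (Inv n w) c = n - k + 1 + card B"
    using row_count_Inv[OF assms] nc by (simp add: row_len_def B_def)
  moreover have "nat \<bar>w c\<bar> \<le> n" using abs_range[OF cc] by simp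
  ultimately show ?thesis using nc k_less_n by (simp add: Inv_entry_def)
qed

lemma nth_f_k_Inv:
  assumes "j < k"
  shows "f_k k n (Inv n w) ! j = Inv_entry (k-j)"
  using nth_f_k[OF assms k_less_n] f_k_entry_Inv[of "k-j"] assms by simp

end

section \<open>Every partition is attained\<close>

lemma card_less_nth_sorted:
  fixes xs :: "nat list"
  assumes "sorted_wrt (<) xs" "i < length xs"
  shows "card {x \<in> set xs. x < xs ! i} = i"
proof -
  have less_iff: "xs ! j < xs ! i \<longleftrightarrow> j < i" if "j < length xs" for j
  proof
    assume lt: "xs ! j < xs ! i"
    show "j < i"
    proof (rule ccontr)
      assume "\<not> j < i"
      then consider "i = j" | "i < j" by linarith
      then show False using sorted_wrt_nth_less[OF assms(1), of i j] that lt by cases auto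
    qed
  qed (use sorted_wrt_nth_less[OF assms(1)] assms(2) in auto)
  have "{x \<in> set xs. x < xs ! i} = (!) xs ` {..<i}"
  proof (intro equalityI subsetI)
    fix x assume "x \<in> {x \<in> set xs. x < xs ! i}"
    then obtain j where "j < length xs" "x = xs ! j" "xs ! j < xs ! i" by (auto simp: in_set_conv_nth)
    then show "x \<in> (!) xs ` {..<i}" using less_iff by auto
  next
    fix x assume "x \<in> (!) xs ` {..<i}"
    then show "x \<in> {x \<in> set xs. x < xs ! i}" using less_iff assms(2) by auto
  qed
  moreover have "inj_on ((!) xs) {..<i}"
    using assms strict_sorted_iff by (intro inj_on_nth) auto
  ultimately show ?thesis by (simp add: card_image)
qed

lemma card_nth_less:
  fixes xs :: "nat list"
  assumes "distinct xs"
  shows "card {j. j < length xs \<and> xs ! j < t} = card {x \<in> set xs. x < t}"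
proof -
  have "(!) xs ` {j. j < length xs \<and> xs ! j < t} = {x \<in> set xs. x < t}"
    by (auto simp: in_set_conv_nth)
  moreover have "inj_on ((!) xs) {j. j < length xs \<and> xs ! j < t}"
    using assms by (intro inj_on_nth) auto
  ultimately show ?thesis using card_image by fastforce
qed

lemma nth_antimono:
  assumes "\<And>i. Suc i < length xs \<Longrightarrow> xs ! Suc i \<le> (xs ! i :: nat)" "i \<le> j" "j < length xs"
  shows "xs ! j \<le> xs ! i"
proof -
  have "sorted_wrt (\<ge>) xs"
    using assms(1) by (subst sorted_wrt_iff_nth_Suc_transp) (auto simp: transp_def)
  then show ?thesis using sorted_wrt_nth_less[of "(\<ge>)" xs i j] assms(2,3) by (cases "i = j") auto
qed
locale og_partition =
  fixes k n :: nat and \<gamma> :: "nat list"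
  assumes k_less_n: "k < n" and gamma_P_part: "\<gamma> \<in> P_part (n-k) n"
begin

lemma length_gamma: "length \<gamma> = k" using gamma_P_part k_less_n by (simp add: P_part_def)
lemma gamma_Suc_le: "Suc i < length \<gamma> \<Longrightarrow> \<gamma>!(Suc i) \<le> \<gamma>!i" using gamma_P_part by (simp add: P_part_def)
lemma gamma_le: "i < length \<gamma> \<Longrightarrow> \<gamma>!i \<le> n + (n-k)" using gamma_P_part by (simp add: P_part_def)
lemma gamma_Suc_less: "Suc i < length \<gamma> \<Longrightarrow> \<gamma>!i > n-k \<Longrightarrow> \<gamma>!(Suc i) < \<gamma>!i"
  using gamma_P_part by (simp add: P_part_def)

definition entry :: "nat \<Rightarrow> nat" where "entry c = \<gamma> ! (k - c)"

lemma entry_mono: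
  assumes "1 \<le> c" "c \<le> c'" "c' \<le> k"
  shows "entry c \<le> entry c'"
  unfolding entry_def using nth_antimono[OF gamma_Suc_le, of "k-c'" "k-c"] assms length_gamma by simp

lemma entry_le: "1 \<le> c \<Longrightarrow> c \<le> k \<Longrightarrow> entry c \<le> n + (n-k)"
  unfolding entry_def using gamma_le length_gamma by simp

lemma entry_pred_less:
  assumes "2 \<le> c" "c \<le> k" "entry c > n-k"
  shows "entry (c-1) < entry c"
proof -
  have e: "k - (c-1) = Suc (k-c)" using assms by simp
  show ?thesis unfolding entry_def e using gamma_Suc_less[of "k-c"] assms length_gamma by (simp add: entry_def)
qed

definition big_rows :: "nat set" where "big_rows = {c \<in> {1..k}. entry c > n-k}"
definition r :: nat where "r = card big_rows"

lemma big_rows_eq: "big_rows = {k-r+1..k}"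
  unfolding r_def
proof (rule up_closed_eq_interval)
  show "big_rows \<subseteq> {1..k}" by (auto simp: big_rows_def)
  show "\<And>c c'. c \<in> big_rows \<Longrightarrow> c \<le> c' \<Longrightarrow> c' \<le> k \<Longrightarrow> c' \<in> big_rows"
  proof -
    fix c c' assume "c \<in> big_rows" "c \<le> c'" "c' \<le> k"
    then show "c' \<in> big_rows" using entry_mono[of c c'] by (auto simp: big_rows_def)
  qed
qed

lemma r_le_k: "r \<le> k"
proof -
  have "card big_rows \<le> card {1..k}" by (rule card_mono) (auto simp: big_rows_def)
  then show ?thesis by (simp add: r_def)
qed

lemma entry_big_iff:
  assumes "1 \<le> c" "c \<le> k"
  shows "entry c > n-k \<longleftrightarrow> k - r < c"
proof -
  have "entry c > n-k \<longleftrightarrow> c \<in> big_rows" using assms by (simp add: big_rows_def)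
  also have "\<dots> \<longleftrightarrow> k - r < c" unfolding big_rows_eq using assms r_le_k by auto
  finally show ?thesis .
qed

lemma entry_strict_mono:
  assumes "k - r < c" "c < c'" "c' \<le> k" "1 \<le> c"
  shows "entry c < entry c'"
proof -
  have "entry c' > n-k" using entry_big_iff[of c'] assms by simp
  then have "entry (c'-1) < entry c'" using entry_pred_less[of c'] assms by simp
  moreover have "entry c \<le> entry (c'-1)" using entry_mono[of c "c'-1"] assms by simp
  ultimately show ?thesis by simp
qed

text \<open>Rows \<open>c > k - r\<close>, whose entries exceed \<open>n - k\<close>, get the
  negative values \<open>-z c\<close>. Row \<open>c \<le> k - r\<close> gets the \<open>(c - 1 + entry c)\<close>-th smallest of the remaining
  values \<open>C\<close>: the \<open>c - 1\<close> smaller head values lie below it, so exactly \<open>entry c\<close> of the values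
  \<open>V\<close> left for the tail do.\<close>
definition z :: "nat \<Rightarrow> nat" where "z c = 2*n-k+1 - entry c"
definition Z :: "nat set" where "Z = z ` {k-r+1..k}"
definition C :: "nat set" where "C = {1..n} - Z"
definition us :: "nat list" where "us = sorted_list_of_set C"
definition idx :: "nat \<Rightarrow> nat" where "idx c = c - 1 + entry c"
definition y :: "nat \<Rightarrow> nat" where "y c = us ! idx c"
definition Ys :: "nat set" where "Ys = y ` {1..k-r}"
definition V :: "nat set" where "V = C - Ys"
definition vs :: "nat list" where "vs = sorted_list_of_set V"
definition perm :: "nat \<Rightarrow> int" where
  "perm a = (if 1 \<le> a \<and> a \<le> k-r then int (y a) else if k-r < a \<and> a \<le> k then - int (z a)
           else if k < a \<and> a \<le> n then int (vs ! (a-k-1)) else 0)"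

lemma entry_big: "k - r < c \<Longrightarrow> c \<le> k \<Longrightarrow> entry c > n-k \<and> entry c \<le> n + (n-k)"
  using entry_big_iff[of c] entry_le[of c] by simp

lemma entry_small: "1 \<le> c \<Longrightarrow> c \<le> k - r \<Longrightarrow> entry c \<le> n-k"
proof -
  assume c: "1 \<le> c" "c \<le> k - r"
  then have "c \<le> k" by simp
  then show ?thesis using entry_big_iff[of c] c by linarith
qed

lemma z_range: "k - r < c \<Longrightarrow> c \<le> k \<Longrightarrow> 1 \<le> z c \<and> z c \<le> n"
proof -
  assume c: "k - r < c" "c \<le> k"
  then have "entry c > n-k" "entry c \<le> n + (n-k)" using entry_big[of c] by auto
  then show ?thesis using k_less_n unfolding z_def by linarith
qed

lemma z_dec: "k - r < c \<Longrightarrow> c < c' \<Longrightarrow> c' \<le> k \<Longrightarrow> z c' < z c"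
proof -
  assume c: "k - r < c" "c < c'" "c' \<le> k"
  then have "entry c < entry c'" "entry c' \<le> n + (n-k)" using entry_strict_mono[of c c'] entry_big[of c'] by auto
  then show ?thesis using k_less_n unfolding z_def by linarith
qed

lemma z_inj: "inj_on z {k-r+1..k}"
proof (rule inj_onI)
  fix a b assume "a \<in> {k-r+1..k}" "b \<in> {k-r+1..k}" "z a = z b"
  then show "a = b" using z_dec[of a b] z_dec[of b a] by (cases a b rule: linorder_cases) auto
qed

lemma card_Z: "card Z = r"
  unfolding Z_def using card_image[OF z_inj] r_le_k by simp

lemma Z_subset: "Z \<subseteq> {1..n}"
  unfolding Z_def using z_range by auto

lemma finite_C: "finite C" by (simp add: C_def)

lemma card_C: "card C = n - r"
  unfolding C_def using card_Diff_subset[OF _ Z_subset] card_Z finite_subset[OF Z_subset] by simp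

lemma us_len: "length us = n - r" unfolding us_def using card_C by simp
lemma us_set: "set us = C" unfolding us_def using finite_C by simp
lemma us_sorted: "sorted_wrt (<) us" unfolding us_def by (rule strict_sorted_list_of_set)

lemma idx_bound: "1 \<le> c \<Longrightarrow> c \<le> k - r \<Longrightarrow> idx c < n - r"
  using entry_small[of c] r_le_k k_less_n unfolding idx_def by simp

lemma idx_mono: "1 \<le> c \<Longrightarrow> c < c' \<Longrightarrow> c' \<le> k - r \<Longrightarrow> idx c < idx c'"
proof -
  assume c: "1 \<le> c" "c < c'" "c' \<le> k - r"
  then have "entry c \<le> entry c'" using entry_mono[of c c'] by simp
  then show ?thesis using c unfolding idx_def by linarith
qed

lemma y_in: "1 \<le> c \<Longrightarrow> c \<le> k - r \<Longrightarrow> y c \<in> C"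
  using idx_bound[of c] us_len us_set unfolding y_def by (metis nth_mem)

lemma y_mono: "1 \<le> c \<Longrightarrow> c < c' \<Longrightarrow> c' \<le> k - r \<Longrightarrow> y c < y c'"
  unfolding y_def using sorted_wrt_nth_less[OF us_sorted, of "idx c" "idx c'"] idx_mono[of c c'] idx_bound[of c'] us_len
  by simp

lemma y_inj: "inj_on y {1..k-r}"
proof (rule inj_onI)
  fix a b assume "a \<in> {1..k-r}" "b \<in> {1..k-r}" "y a = y b"
  then show "a = b" using y_mono[of a b] y_mono[of b a] by (cases a b rule: linorder_cases) auto
qed

lemma Ys_subset: "Ys \<subseteq> C" unfolding Ys_def using y_in by auto

lemma card_Ys: "card Ys = k - r" unfolding Ys_def using card_image[OF y_inj] by simp

lemma card_V: "card V = n - k"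
  unfolding V_def using card_Diff_subset[OF _ Ys_subset] card_Ys card_C finite_subset[OF Ys_subset finite_C] r_le_k k_less_n
  by simp

lemma finite_V: "finite V" unfolding V_def using finite_C by simp
lemma vs_len: "length vs = n - k" unfolding vs_def using card_V by simp
lemma vs_set: "set vs = V" unfolding vs_def using finite_V by simp
lemma vs_sorted: "sorted_wrt (<) vs" unfolding vs_def by (rule strict_sorted_list_of_set)

lemma C_subset: "C \<subseteq> {1..n}" by (auto simp: C_def)
lemma V_subset: "V \<subseteq> {1..n}" using C_subset by (auto simp: V_def)

lemma vs_in: "k < a \<Longrightarrow> a \<le> n \<Longrightarrow> vs ! (a-k-1) \<in> V"
proof -
  assume a: "k < a" "a \<le> n"
  then have "a - k - 1 < length vs" using vs_len by simp
  then have "vs ! (a-k-1) \<in> set vs" by (rule nth_mem)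
  then show ?thesis using vs_set by simp
qed

lemma perm_head: "1 \<le> a \<Longrightarrow> a \<le> k - r \<Longrightarrow> perm a = int (y a)" by (simp add: perm_def)
lemma perm_middle: "k - r < a \<Longrightarrow> a \<le> k \<Longrightarrow> perm a = - int (z a)" by (simp add: perm_def)
lemma perm_tail: "k < a \<Longrightarrow> a \<le> n \<Longrightarrow> perm a = int (vs ! (a-k-1))"
proof -
  assume a: "k < a" "a \<le> n"
  then have "\<not> (1 \<le> a \<and> a \<le> k - r)" "\<not> (k - r < a \<and> a \<le> k)" by auto
  then show ?thesis using a unfolding perm_def by simp
qed

lemma range_subset_image_abs_perm: "{1..n} \<subseteq> (\<lambda>a. nat \<bar>perm a\<bar>) ` {1..n}"
proof
  fix x assume x: "x \<in> {1..n}"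
  consider "x \<in> Z" | "x \<in> Ys" | "x \<in> V" using x by (auto simp: C_def V_def)
  then show "x \<in> (\<lambda>a. nat \<bar>perm a\<bar>) ` {1..n}"
  proof cases
    case 1
    then obtain c where "c \<in> {k-r+1..k}" "x = z c" by (auto simp: Z_def)
    then show ?thesis using perm_middle[of c] k_less_n by (intro image_eqI[of _ _ c]) auto
  next
    case 2
    then obtain c where "c \<in> {1..k-r}" "x = y c" by (auto simp: Ys_def)
    then show ?thesis using perm_head[of c] k_less_n by (intro image_eqI[of _ _ c]) auto
  next
    case 3
    then have "x \<in> set vs" using vs_set by simp
    then obtain j where "j < length vs" "x = vs ! j" by (auto simp: in_set_conv_nth)
    then show ?thesis using perm_tail[of "k+1+j"] vs_len k_less_n by (intro image_eqI[of _ _ "k+1+j"]) auto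
  qed
qed

lemma bij_abs_perm: "bij_betw (\<lambda>a. nat \<bar>perm a\<bar>) {1..n} {1..n}"
proof -
  let ?f = "\<lambda>a. nat \<bar>perm a\<bar>"
  have fin: "finite (?f ` {1..n})" by simp
  have "card {1..n} \<le> card (?f ` {1..n})" by (rule card_mono[OF fin range_subset_image_abs_perm])
  moreover have "card (?f ` {1..n}) \<le> card {1..n}" by (rule card_image_le) simp
  ultimately have card_eq: "card (?f ` {1..n}) = card {1..n}" by simp
  have "inj_on ?f {1..n}" by (rule eq_card_imp_inj_on) (simp, rule card_eq)
  moreover have "?f ` {1..n} = {1..n}"
    using card_subset_eq[OF fin range_subset_image_abs_perm] card_eq by simp
  ultimately show ?thesis by (simp add: bij_betw_def)
qed

lemma og_perm_perm: "og_perm k n perm r"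
proof unfold_locales
  show "bij_betw (\<lambda>a. nat \<bar>perm a\<bar>) {1..n} {1..n}" by (rule bij_abs_perm)
  show "k < n" by (rule k_less_n)
  show "r \<le> k" by (rule r_le_k)
  show "perm a = 0" if "a \<notin> {1..n}" for a using that k_less_n by (auto simp: perm_def)
  show "perm a > 0" if "a \<in> {1..k-r}" for a
    using that y_in[of a] C_subset perm_head[of a] by fastforce
  show "perm a < 0" if "a \<in> {k-r+1..k}" for a
    using that perm_middle[of a] z_range[of a] by simp
  show "perm a > 0" if "a \<in> {k+1..n}" for a
    using that vs_in[of a] V_subset perm_tail[of a] by fastforce
  show "perm a < perm b" if "1 \<le> a" "a < b" "b \<le> k - r" for a b
    using that perm_head[of a] perm_head[of b] y_mono[of a b] by simp
  show "\<bar>perm a\<bar> > \<bar>perm b\<bar>" if "k - r + 1 \<le> a" "a < b" "b \<le> k" for a b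
    using that perm_middle[of a] perm_middle[of b] z_dec[of a b] by simp
  show "perm a < perm b" if "k + 1 \<le> a" "a < b" "b \<le> n" for a b
  proof -
    have i: "a-k-1 < b-k-1" "b-k-1 < length vs" using that vs_len by auto
    then have "vs ! (a-k-1) < vs ! (b-k-1)"
      using sorted_wrt_nth_less[OF vs_sorted i] by simp
    then show ?thesis using perm_tail[of a] perm_tail[of b] that by simp
  qed
qed

lemma card_tail_less_head:
  assumes "1 \<le> c" "c \<le> k - r"
  shows "card {b \<in> {k+1..n}. perm b < perm c} = card {x \<in> V. x < y c}"
proof -
  have "{b \<in> {k+1..n}. perm b < perm c} = (\<lambda>j. k+1+j) ` {j. j < length vs \<and> vs ! j < y c}"
  proof (intro equalityI subsetI)
    fix b assume "b \<in> {b \<in> {k+1..n}. perm b < perm c}"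
    then show "b \<in> (\<lambda>j. k+1+j) ` {j. j < length vs \<and> vs ! j < y c}"
      using perm_tail[of b] perm_head[of c] assms vs_len by (intro image_eqI[of _ _ "b-k-1"]) auto
  next
    fix b assume "b \<in> (\<lambda>j. k+1+j) ` {j. j < length vs \<and> vs ! j < y c}"
    then show "b \<in> {b \<in> {k+1..n}. perm b < perm c}"
      using perm_tail perm_head[of c] assms vs_len by auto
  qed
  then have "card {b \<in> {k+1..n}. perm b < perm c} = card {j. j < length vs \<and> vs ! j < y c}"
    by (simp add: card_image inj_on_def)
  also have "\<dots> = card {x \<in> V. x < y c}"
  proof -
    have "distinct vs" using vs_sorted strict_sorted_iff by blast
    then show ?thesis using card_nth_less[of vs "y c"] vs_set by simp
  qed
  finally show ?thesis .
qed

lemma card_Ys_less_y: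
  assumes "1 \<le> c" "c \<le> k - r"
  shows "card {x \<in> Ys. x < y c} = c - 1"
proof -
  have "{x \<in> Ys. x < y c} = y ` {1..<c}"
  proof (intro equalityI subsetI)
    fix x assume "x \<in> {x \<in> Ys. x < y c}"
    then obtain c' where c': "c' \<in> {1..k-r}" "x = y c'" "y c' < y c" by (auto simp: Ys_def)
    then have "c' < c" using y_mono[of c c'] assms by (cases c c' rule: linorder_cases) auto
    then show "x \<in> y ` {1..<c}" using c' by auto
  next
    fix x assume "x \<in> y ` {1..<c}"
    then show "x \<in> {x \<in> Ys. x < y c}" using y_mono[of _ c] assms by (auto simp: Ys_def)
  qed
  moreover have "inj_on y {1..<c}" by (rule inj_on_subset[OF y_inj]) (use assms in auto)
  ultimately show ?thesis by (simp add: card_image)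
qed

lemma card_V_less_y:
  assumes "1 \<le> c" "c \<le> k - r"
  shows "card {x \<in> V. x < y c} = entry c"
proof -
  have "card {x \<in> C. x < y c} = idx c"
    using card_less_nth_sorted[OF us_sorted, of "idx c"] idx_bound[OF assms] us_len us_set
    unfolding y_def by simp
  moreover have "{x \<in> C. x < y c} = {x \<in> V. x < y c} \<union> {x \<in> Ys. x < y c}"
    using Ys_subset unfolding V_def by auto
  moreover have "card ({x \<in> V. x < y c} \<union> {x \<in> Ys. x < y c})
      = card {x \<in> V. x < y c} + card {x \<in> Ys. x < y c}"
    using finite_V finite_subset[OF Ys_subset finite_C] by (intro card_Un_disjoint) (auto simp: V_def)
  ultimately show ?thesis using card_Ys_less_y[OF assms] assms unfolding idx_def by simp
qed

lemma Inv_entry_perm: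
  assumes "1 \<le> c" "c \<le> k"
  shows "og_perm.Inv_entry k n perm c = entry c"
proof -
  interpret W: og_perm k n perm r by (rule og_perm_perm)
  show ?thesis
  proof (cases "c \<le> k - r")
    case True
    then have "perm c > 0" using perm_head[of c] y_in[of c] C_subset assms by fastforce
    then show ?thesis
      using card_tail_less_head[OF assms(1) True] card_V_less_y[OF assms(1) True]
      unfolding W.Inv_entry_def by simp
  next
    case False
    then have "perm c = - int (z c)" "1 \<le> z c" using perm_middle[of c] z_range[of c] assms by auto
    moreover have "2*n-k+1 - z c = entry c" using entry_le[OF assms] k_less_n unfolding z_def by simp
    ultimately show ?thesis unfolding W.Inv_entry_def by simp
  qed
qed

lemma f_k_Inv_perm: "f_k k n (Inv n perm) = \<gamma>"
proof (rule nth_equalityI)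
  interpret W: og_perm k n perm r by (rule og_perm_perm)
  show "length (f_k k n (Inv n perm)) = length \<gamma>" using length_f_k length_gamma by simp
  fix j assume "j < length (f_k k n (Inv n perm))"
  then have j: "j < k" using length_f_k by simp
  have "f_k k n (Inv n perm) ! j = W.Inv_entry (k-j)" using W.nth_f_k_Inv[OF j] .
  also have "\<dots> = entry (k-j)" using Inv_entry_perm[of "k-j"] j by simp
  also have "\<dots> = \<gamma> ! j" unfolding entry_def using j by simp
  finally show "f_k k n (Inv n perm) ! j = \<gamma> ! j" .
qed

end

lemma Y_OG_subset_Theta:
  assumes "k < n"
  shows "Y_OG k n \<subseteq> Theta k n"
proof
  fix S assume "S \<in> Y_OG k n"
  then obtain w where w: "w \<in> W_OG k n" and S: "S = Inv n w" by (auto simp: Y_OG_def)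
  from w obtain r where "og_perm k n w r" using og_perm_iff_mem_W_OG[OF assms] by blast
  then show "S \<in> Theta k n" unfolding S by (rule og_perm.Inv_in_Theta)
qed

lemma P_part_subset_f_k_Y_OG:
  assumes "k < n"
  shows "P_part (n - k) n \<subseteq> f_k k n ` Y_OG k n"
proof
  fix \<gamma> assume "\<gamma> \<in> P_part (n - k) n"
  then have \<gamma>: "og_partition k n \<gamma>" using assms by (simp add: og_partition_def)
  have "og_partition.perm k n \<gamma> \<in> W_OG k n"
    using og_perm_iff_mem_W_OG[OF assms] og_partition.og_perm_perm[OF \<gamma>] by blast
  then have "Inv n (og_partition.perm k n \<gamma>) \<in> Y_OG k n" unfolding Y_OG_def by (rule imageI)
  then show "\<gamma> \<in> f_k k n ` Y_OG k n"
    by (rule image_eqI[where f = "f_k k n", OF og_partition.f_k_Inv_perm[OF \<gamma>, symmetric]])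
qed

lemma inj_on_f_k_Theta:
  assumes "k < n"
  shows "inj_on (f_k k n) (Theta k n)"
  using f_k_inj_on_Theta assms by (intro inj_onI) (simp add: Theta_member_def)

lemma f_k_Theta_subset_P_part:
  assumes "k < n"
  shows "f_k k n ` Theta k n \<subseteq> P_part (n - k) n"
  using Theta_member.f_k_in_P_part assms by (auto simp: Theta_member_def)

lemma Theta_subset_Y_OG:
  assumes "k < n"
  shows "Theta k n \<subseteq> Y_OG k n"
proof
  fix S assume S: "S \<in> Theta k n"
  then have "f_k k n S \<in> f_k k n ` Y_OG k n"
    using f_k_Theta_subset_P_part[OF assms] P_part_subset_f_k_Y_OG[OF assms] by blast
  then obtain T where T: "T \<in> Y_OG k n" "f_k k n T = f_k k n S" by (metis imageE)
  then have "T = S" using inj_onD[OF inj_on_f_k_Theta[OF assms] T(2)] S Y_OG_subset_Theta[OF assms] by blast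
  then show "S \<in> Y_OG k n" using T(1) by simp
qed

theorem corollary3p9:
  fixes k n :: nat
  assumes "1 \<le> k" and "k < n"
  shows "Y_OG k n = Theta k n \<and> bij_betw (f_k k n) (Y_OG k n) (P_part (n - k) n)"
proof -
  have eq: "Y_OG k n = Theta k n"
    using Y_OG_subset_Theta[OF assms(2)] Theta_subset_Y_OG[OF assms(2)] by (rule subset_antisym)
  have "f_k k n ` Y_OG k n = P_part (n - k) n"
    using f_k_Theta_subset_P_part[OF assms(2)] P_part_subset_f_k_Y_OG[OF assms(2)]
    unfolding eq by (rule subset_antisym)
  then show ?thesis using eq inj_on_f_k_Theta[OF assms(2)] by (simp add: bij_betw_def)
qed

end
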